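(* Let $R\in(0,\infty)$, $k\geq1$ an integer, $p>1$, and $N=kp$. Then there exists a constant $C=C(k,p,R)>0$ such that for all $v\in W^{k,p}((0,R),\sinh^{N-1}(t))$ and all $t\in(0,R]$, \[ |v(t)|\leq\left(\log\frac{\tanh(\frac R2)}{\tanh(\frac t2)}\right)^{\frac{p-1}{p}}\frac{\|v^{(k)}\|_{L^p_{\sinh^{N-1}}}}{(k-1)!}+C\|v\|_{W^{k,p}_{\sinh^{N-1}}}. \] Moreover, if $k=1$ and $v(R)=0$, the inequality holds with $C=0$.
   Context: $W^{k,p}((0,R),\sinh^{N-1}(t))$ is the space of functions $v\colon(0,R)\to\mathbb R$ with weak derivatives up to order $k$ such that $\|v\|_{W^{k,p}_{\sinh^{N-1}}}=\left(\sum_{j=0}^k\int_0^R|v^{(j)}(t)|^p\sinh^{N-1}(t)\mathrm dt\right)^{1/p}<\infty$; $\|w\|_{L^p_{\sinh^{N-1}}}=\left(\int_0^R|w|^p\sinh^{N-1}(t)\mathrm dt\right)^{1/p}$. Elements of this space have representatives continuous on $(0,R]$, and $v(t)$ refers to that representative. *)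

theory Defs
  imports "HOL-Analysis.Analysis"
begin

definition test_fun :: "real \<Rightarrow> (real \<Rightarrow> real) \<Rightarrow> bool" where
  "test_fun R \<phi> \<longleftrightarrow>
     (\<forall>n x. ((deriv ^^ n) \<phi>) differentiable (at x)) \<and>
     (\<exists>a b. 0 < a \<and> a \<le> b \<and> b < R \<and> (\<forall>x. x \<notin> {a..b} \<longrightarrow> \<phi> x = 0))"

definition weak_deriv_on :: "real \<Rightarrow> (real \<Rightarrow> real) \<Rightarrow> (real \<Rightarrow> real) \<Rightarrow> bool" where
  "weak_deriv_on R f g \<longleftrightarrow>
     (\<forall>a b. 0 < a \<longrightarrow> b < R \<longrightarrow>
        set_integrable lborel {a..b} f \<and> set_integrable lborel {a..b} g) \<and>
     (\<forall>\<phi>. test_fun R \<phi> \<longrightarrow>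
        (LBINT t:{0<..<R}. f t * deriv \<phi> t) = - (LBINT t:{0<..<R}. g t * \<phi> t))"

definition wint :: "real \<Rightarrow> real \<Rightarrow> real \<Rightarrow> (real \<Rightarrow> real) \<Rightarrow> real" where
  "wint N p R w = (LBINT t:{0<..<R}. \<bar>w t\<bar> powr p * sinh t powr (N - 1))"

definition Lp_sinh_norm :: "real \<Rightarrow> real \<Rightarrow> real \<Rightarrow> (real \<Rightarrow> real) \<Rightarrow> real" where
  "Lp_sinh_norm N p R w = wint N p R w powr (1 / p)"

text \<open>vs 0 = v and vs j is its j-th weak derivative, for j \<le> k; membership in
  W^{k,p}((0,R), sinh^(N-1)).\<close>
definition in_Wkp_sinh :: "nat \<Rightarrow> real \<Rightarrow> real \<Rightarrow> real \<Rightarrow> (nat \<Rightarrow> real \<Rightarrow> real) \<Rightarrow> bool" where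
  "in_Wkp_sinh k p N R vs \<longleftrightarrow>
     (\<forall>j<k. weak_deriv_on R (vs j) (vs (Suc j))) \<and>
     (\<forall>j\<le>k. set_integrable lborel {0<..<R} (\<lambda>t. \<bar>vs j t\<bar> powr p * sinh t powr (N - 1)))"

definition Wkp_sinh_norm :: "nat \<Rightarrow> real \<Rightarrow> real \<Rightarrow> real \<Rightarrow> (nat \<Rightarrow> real \<Rightarrow> real) \<Rightarrow> real" where
  "Wkp_sinh_norm k p N R vs = (\<Sum>j\<le>k. wint N p R (vs j)) powr (1 / p)"

end

(*
  A point value v(t) is recovered from the weak derivatives by testing against a smoothed
  one-sided cutoff. Let G be smooth, vanishing beyond an endpoint e, with G^(j)(t) = 0 for
  j < k - 1 and G^(k-1)(t) = 1, and let H_eps be a smooth step rising from 0 to 1 between t and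
  t + eps (towards e). Integrating by parts k times against H_eps G and letting eps -> 0 gives
    v(t) = +- ((-1)^k int_t^e v^(k) G - int_t^e v G^(k)),
  because the terms in which a derivative falls on H_eps concentrate at t, where v is continuous.

  Take G(s) = (s - t)^(k-1)/(k-1)! times a cutoff equal to 1 near t and 0 near e. The first
  integral is estimated by Hoelder's inequality with weight sinh^(N-1): as N = kp and
  s <= sinh s, the dual weight s^((k-1)p/(p-1)) sinh(s)^(-(N-1)/(p-1)) is at most 1/sinh s,
  whose integral from t is ln(tanh(R/2)/tanh(t/2)). The second integral only involves v on the
  transition layer of the cutoff, a fixed interval away from t, so it is at most C ||v||. For
  t >= R/2 the interval is taken to the left of t. For k = 1 and v(R) = 0 the layer is moved so
  close to R that v is small on it, which removes the constant.
*)
theory Submission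
  imports Defs "HOL-Computational_Algebra.Polynomial"
begin

section \<open>Smooth functions as sequences of derivatives\<close>

definition deriv_seq :: "(nat \<Rightarrow> real \<Rightarrow> real) \<Rightarrow> bool" where
  "deriv_seq F \<longleftrightarrow> (\<forall>n x. (F n has_real_derivative F (Suc n) x) (at x))"

lemma deriv_seqD: "deriv_seq F \<Longrightarrow> (F n has_real_derivative F (Suc n) x) (at x)"
  unfolding deriv_seq_def by blast

lemma deriv_seq_deriv: "deriv_seq F \<Longrightarrow> deriv (F n) = F (Suc n)"
  using deriv_seqD DERIV_imp_deriv by (intro ext) blast

lemma deriv_seq_funpow_deriv: "deriv_seq F \<Longrightarrow> (deriv ^^ n) (F 0) = F n"
  by (induction n) (simp_all add: deriv_seq_deriv)

lemma deriv_seq_continuous_on: "deriv_seq F \<Longrightarrow> continuous_on A (F n)"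
  by (meson DERIV_isCont continuous_at_imp_continuous_on deriv_seqD)

lemma deriv_seq_shift: "deriv_seq F \<Longrightarrow> deriv_seq (\<lambda>n. F (n + m))"
  unfolding deriv_seq_def by simp

lemma deriv_seq_affine:
  assumes "deriv_seq F"
  shows "deriv_seq (\<lambda>n x. a ^ n * F n (a * x + c))"
  unfolding deriv_seq_def
proof (intro allI)
  fix n x
  have "((\<lambda>x. F n (a * x + c)) has_real_derivative F (Suc n) (a * x + c) * a) (at x)"
    by (rule DERIV_chain2[OF deriv_seqD[OF assms]]) (auto intro!: derivative_eq_intros)
  from DERIV_cmult[OF this, of "a ^ n"]
  show "((\<lambda>x. a ^ n * F n (a * x + c)) has_real_derivative a ^ Suc n * F (Suc n) (a * x + c)) (at x)"
    by (simp add: algebra_simps)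
qed

lemma deriv_seq_vanishes_on_open:
  assumes F: "deriv_seq F" and S: "open S" "x \<in> S" and zero: "\<And>y. y \<in> S \<Longrightarrow> F 0 y = 0"
  shows "F n x = 0"
  using S(2)
proof (induction n arbitrary: x)
  case (Suc n)
  have "(F n has_real_derivative 0) (at x)"
    by (rule has_field_derivative_transform_within_open[OF DERIV_const S(1) Suc.prems])
       (use Suc.IH in auto)
  then show ?case using deriv_seqD[OF F] DERIV_unique by metis
qed (use zero in simp)

definition leibniz :: "(nat \<Rightarrow> real \<Rightarrow> real) \<Rightarrow> (nat \<Rightarrow> real \<Rightarrow> real) \<Rightarrow> nat \<Rightarrow> real \<Rightarrow> real" where
  "leibniz F G n x = (\<Sum>i\<le>n. real (n choose i) * F i x * G (n - i) x)"

lemma leibniz_0 [simp]: "leibniz F G 0 x = F 0 x * G 0 x"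
  by (simp add: leibniz_def)

lemma leibniz_Suc_sum:
  "(\<Sum>i\<le>n. real (n choose i) * (F (Suc i) x * G (n - i) x + F i x * G (Suc (n - i)) x))
     = leibniz F G (Suc n) x"
proof -
  have shifted: "(\<Sum>i\<le>n. real (n choose i) * (F (Suc i) x * G (n - i) x))
      = (\<Sum>i\<le>Suc n. real (n choose (i - 1)) * (if i = 0 then 0 else F i x * G (Suc n - i) x))"
    by (subst sum.atMost_Suc_shift) (simp add: sum.atMost_Suc_shift)
  have extended: "(\<Sum>i\<le>n. real (n choose i) * (F i x * G (Suc (n - i)) x))
      = (\<Sum>i\<le>Suc n. real (n choose i) * (F i x * G (Suc n - i) x))"
    by (simp add: Suc_diff_le)
  have pascal: "real (n choose (i - 1)) * (if i = 0 then 0 else F i x * G (Suc n - i) x)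
      + real (n choose i) * (F i x * G (Suc n - i) x) = real (Suc n choose i) * F i x * G (Suc n - i) x"
    for i by (cases i) (auto simp: algebra_simps)
  show ?thesis
    unfolding distrib_left sum.distrib shifted extended leibniz_def sum.distrib[symmetric] pascal ..
qed

lemma deriv_seq_leibniz:
  assumes F: "deriv_seq F" and G: "deriv_seq G"
  shows "deriv_seq (leibniz F G)"
  unfolding deriv_seq_def
proof (intro allI)
  fix n x
  have "(leibniz F G n has_real_derivative
      (\<Sum>i\<le>n. real (n choose i) * (F (Suc i) x * G (n - i) x + F i x * G (Suc (n - i)) x))) (at x)"
    unfolding leibniz_def[abs_def] mult.assoc
    by (intro DERIV_sum DERIV_cmult) (auto intro!: derivative_eq_intros deriv_seqD[OF F] deriv_seqD[OF G])
  then show "(leibniz F G n has_real_derivative leibniz F G (Suc n) x) (at x)"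
    by (simp only: leibniz_Suc_sum)
qed

definition leibniz_tail :: "(nat \<Rightarrow> real \<Rightarrow> real) \<Rightarrow> (nat \<Rightarrow> real \<Rightarrow> real) \<Rightarrow> nat \<Rightarrow> real \<Rightarrow> real" where
  "leibniz_tail F G n x = (\<Sum>i\<in>{1..n}. real (n choose i) * F i x * G (n - i) x)"

lemma leibniz_eq_tail: "leibniz F G n x = F 0 x * G n x + leibniz_tail F G n x"
  by (simp add: leibniz_def leibniz_tail_def atMost_atLeast0 sum.atLeast_Suc_atMost)

lemma deriv_seq_taylor_bound:
  assumes G: "deriv_seq G" and zero: "\<And>j. j < m \<Longrightarrow> G j t = 0"
    and bound: "\<And>s. \<bar>s - t\<bar> \<le> 1 \<Longrightarrow> \<bar>G m s\<bar> \<le> B"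
    and "r \<le> m" "\<bar>s - t\<bar> \<le> 1"
  shows "\<bar>G (m - r) s\<bar> \<le> B * \<bar>s - t\<bar> ^ r / fact r"
proof (cases "r = 0 \<or> s = t")
  case True
  then show ?thesis
    using bound[of s] zero[of "m - r"] assms(4,5) by (cases "r = 0") auto
next
  case False
  have "\<exists>\<xi>. (if s < t then s < \<xi> \<and> \<xi> < t else t < \<xi> \<and> \<xi> < s) \<and>
      G (m - r) s = (\<Sum>i<r. G (m - r + i) t / fact i * (s - t) ^ i)
        + G (m - r + r) \<xi> / fact r * (s - t) ^ r"
    by (rule Taylor[where a = "t - 1" and b = "t + 1"])
       (use False assms(5) deriv_seqD[OF G] in \<open>auto simp: abs_le_iff\<close>)
  then obtain \<xi> where between: "if s < t then s < \<xi> \<and> \<xi> < t else t < \<xi> \<and> \<xi> < s"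
    and eq: "G (m - r) s = (\<Sum>i<r. G (m - r + i) t / fact i * (s - t) ^ i)
      + G (m - r + r) \<xi> / fact r * (s - t) ^ r"
    by blast
  from between have \<xi>: "\<bar>\<xi> - t\<bar> \<le> \<bar>s - t\<bar>"
    by (auto split: if_splits)
  have "G (m - r) s = G m \<xi> / fact r * (s - t) ^ r"
    using eq \<open>r \<le> m\<close> zero False by simp
  also have "\<bar>\<dots>\<bar> \<le> B * \<bar>s - t\<bar> ^ r / fact r"
    using bound[of \<xi>] \<xi> assms(5)
    by (simp add: abs_mult power_abs divide_right_mono mult_right_mono)
  finally show ?thesis .
qed

section \<open>A smooth step function\<close>

lemma poly_times_exp_minus_tendsto_0: "((\<lambda>z. poly q z * exp (- z)) \<longlongrightarrow> (0::real)) at_top"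
proof -
  have "((\<lambda>z. \<Sum>i\<le>degree q. coeff q i * (z ^ i / exp z)) \<longlongrightarrow> (\<Sum>i\<le>degree q. coeff q i * 0)) at_top"
    by (intro tendsto_sum tendsto_mult tendsto_const tendsto_power_div_exp_0)
  moreover have "(\<lambda>z. \<Sum>i\<le>degree q. coeff q i * (z ^ i / exp z)) = (\<lambda>z. poly q z * exp (- z))"
    by (intro ext) (simp add: poly_altdef sum_distrib_right exp_minus divide_inverse mult.assoc)
  ultimately show ?thesis by simp
qed

text \<open>Since \<open>(P(1/x) exp(-1/x))' = (P - P')(1/x) exp(-1/x) / x^2\<close>, the derivatives of the
  flat function \<open>exp(-1/x)\<close> are again of this form.\<close>

fun expinv_poly :: "nat \<Rightarrow> real poly" where
  "expinv_poly 0 = 1"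
| "expinv_poly (Suc n) = [:0, 0, 1:] * (expinv_poly n - pderiv (expinv_poly n))"

definition expinv :: "nat \<Rightarrow> real \<Rightarrow> real" where
  "expinv n x = (if 0 < x then poly (expinv_poly n) (inverse x) * exp (- inverse x) else 0)"

lemma expinv_nonpos: "x \<le> 0 \<Longrightarrow> expinv n x = 0"
  by (simp add: expinv_def)

lemma expinv_0: "expinv 0 x = (if 0 < x then exp (- inverse x) else 0)"
  by (simp add: expinv_def)

lemma has_real_derivative_expinv_pos:
  assumes "0 < x"
  shows "(expinv n has_real_derivative expinv (Suc n) x) (at x)"
proof -
  have "((\<lambda>x. poly (expinv_poly n) (inverse x) * exp (- inverse x)) has_real_derivative
      poly (pderiv (expinv_poly n)) (inverse x) * (- inverse (x ^ 2)) * exp (- inverse x)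
      + poly (expinv_poly n) (inverse x) * (exp (- inverse x) * inverse (x ^ 2))) (at x)"
    using assms
    by (auto intro!: derivative_eq_intros DERIV_chain2[OF poly_DERIV] simp: power2_eq_square)
  also have "poly (pderiv (expinv_poly n)) (inverse x) * (- inverse (x ^ 2)) * exp (- inverse x)
      + poly (expinv_poly n) (inverse x) * (exp (- inverse x) * inverse (x ^ 2)) = expinv (Suc n) x"
    using assms by (simp add: expinv_def algebra_simps power2_eq_square)
  finally show ?thesis
    by (rule has_field_derivative_transform_within_open[where S = "{0<..}"])
       (use assms in \<open>auto simp: expinv_def\<close>)
qed

lemma has_real_derivative_expinv_0: "(expinv n has_real_derivative 0) (at 0)"
proof -
  have "((\<lambda>y. (expinv n y - expinv n 0) / (y - 0)) \<longlongrightarrow> 0) (at 0)"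
  proof (rule filterlim_split_at)
    show "((\<lambda>y. (expinv n y - expinv n 0) / (y - 0)) \<longlongrightarrow> 0) (at_left 0)"
      by (rule tendsto_eventually)
         (auto simp: eventually_at_left_field expinv_def intro: exI[of _ "-1"])
    have "((\<lambda>y. poly ([:0, 1:] * expinv_poly n) (inverse y) * exp (- inverse y)) \<longlongrightarrow> 0) (at_right 0)"
      by (rule filterlim_compose[OF poly_times_exp_minus_tendsto_0 filterlim_inverse_at_top_right])
    then show "((\<lambda>y. (expinv n y - expinv n 0) / (y - 0)) \<longlongrightarrow> 0) (at_right 0)"
      by (rule Lim_transform_eventually)
         (auto simp: eventually_at_right_field expinv_def divide_inverse intro!: exI[of _ 1])
  qed
  then show ?thesis by (simp add: has_field_derivative_iff)
qed

lemma deriv_seq_expinv: "deriv_seq expinv"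
  unfolding deriv_seq_def
proof (intro allI)
  fix n and x :: real
  consider "0 < x" | "x = 0" | "x < 0" by linarith
  then show "(expinv n has_real_derivative expinv (Suc n) x) (at x)"
  proof cases
    case 1
    then show ?thesis by (rule has_real_derivative_expinv_pos)
  next
    case 2
    then show ?thesis using has_real_derivative_expinv_0 by (simp add: expinv_def)
  next
    case 3
    have "(expinv n has_real_derivative 0) (at x)"
      by (rule has_field_derivative_transform_within_open[OF DERIV_const, where S = "{..<0}"])
         (use 3 in \<open>auto simp: expinv_def\<close>)
    then show ?thesis using 3 by (simp add: expinv_def)
  qed
qed

definition bump :: "nat \<Rightarrow> real \<Rightarrow> real" where
  "bump = leibniz expinv (\<lambda>n x. (-1) ^ n * expinv n ((-1) * x + 1))"

lemma deriv_seq_bump: "deriv_seq bump"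
  unfolding bump_def by (intro deriv_seq_leibniz deriv_seq_affine deriv_seq_expinv)

lemma bump_0: "bump 0 x = expinv 0 x * expinv 0 (1 - x)"
  by (simp add: bump_def)

lemma bump_0_nonneg: "0 \<le> bump 0 x"
  by (simp add: bump_0 expinv_0)

lemma bump_0_pos: "0 < x \<Longrightarrow> x < 1 \<Longrightarrow> 0 < bump 0 x"
  by (simp add: bump_0 expinv_0)

lemma bump_outside: "x \<le> 0 \<or> 1 \<le> x \<Longrightarrow> bump n x = 0"
  by (auto simp: bump_def leibniz_def expinv_nonpos intro!: sum.neutral)

definition step_primitive :: "real \<Rightarrow> real" where
  "step_primitive x = integral {-1..x} (bump 0)"

lemma step_primitive_nonpos: "x \<le> 0 \<Longrightarrow> step_primitive x = 0"
proof -
  assume "x \<le> 0"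
  then have "integral {-1..x} (bump 0) = integral {-1..x} (\<lambda>_. 0)"
    by (intro integral_cong) (simp add: bump_outside)
  then show ?thesis by (simp add: step_primitive_def)
qed

lemma has_real_derivative_step_primitive: "(step_primitive has_real_derivative bump 0 x) (at x)"
proof (cases "x < -1/2")
  case True
  have "((\<lambda>_. 0) has_real_derivative 0) (at x)" by simp
  then have "(step_primitive has_real_derivative 0) (at x)"
    by (rule has_field_derivative_transform_within_open[where S = "{..<-1/2}"])
       (use True step_primitive_nonpos in auto)
  then show ?thesis using True by (simp add: bump_outside)
next
  case False
  have "continuous_on {-1..x+1} (bump 0)" by (rule deriv_seq_continuous_on[OF deriv_seq_bump])
  then have "((\<lambda>u. integral {-1..u} (bump 0)) has_real_derivative bump 0 x) (at x within {-1..x+1})"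
    by (rule integral_has_real_derivative) (use False in auto)
  then have "((\<lambda>u. integral {-1..u} (bump 0)) has_real_derivative bump 0 x) (at x)"
    using False by (subst (asm) at_within_interior) (auto simp: interior_atLeastAtMost_real)
  then show ?thesis by (simp add: step_primitive_def[abs_def])
qed

lemma step_primitive_mono: "x \<le> y \<Longrightarrow> step_primitive x \<le> step_primitive y"
  by (rule DERIV_nonneg_imp_nondecreasing)
     (use has_real_derivative_step_primitive bump_0_nonneg in blast)+

lemma step_primitive_ge_1:
  assumes "1 \<le> x"
  shows "step_primitive x = step_primitive 1"
proof (cases "x = 1")
  case False
  show ?thesis
  proof (rule DERIV_isconst_end[where f = step_primitive])
    show "1 < x" using assms False by simp
    show "continuous_on {1..x} step_primitive"
      by (meson DERIV_isCont continuous_at_imp_continuous_on has_real_derivative_step_primitive)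
    show "(step_primitive has_real_derivative 0) (at y)" if "1 < y" "y < x" for y
      using has_real_derivative_step_primitive[of y] that by (simp add: bump_outside)
  qed
qed simp

lemma step_primitive_1_pos: "0 < step_primitive 1"
proof -
  have "step_primitive 0 < step_primitive 1"
  proof (rule DERIV_pos_imp_increasing_open[where f = step_primitive])
    show "\<exists>y. (step_primitive has_real_derivative y) (at x) \<and> 0 < y" if "0 < x" "x < 1" for x
      using has_real_derivative_step_primitive bump_0_pos that by blast
    show "continuous_on {0..1} step_primitive"
      by (meson DERIV_isCont continuous_at_imp_continuous_on has_real_derivative_step_primitive)
  qed simp
  then show ?thesis by (simp add: step_primitive_nonpos)
qed

definition smooth_step :: "nat \<Rightarrow> real \<Rightarrow> real" where
  "smooth_step n x = (if n = 0 then step_primitive x else bump (n - 1) x) / step_primitive 1"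

lemma deriv_seq_smooth_step: "deriv_seq smooth_step"
  unfolding deriv_seq_def
proof (intro allI)
  fix n x
  show "(smooth_step n has_real_derivative smooth_step (Suc n) x) (at x)"
  proof (cases n)
    case 0
    then show ?thesis unfolding smooth_step_def
      using DERIV_cdivide[OF has_real_derivative_step_primitive] by simp
  next
    case (Suc m)
    then show ?thesis unfolding smooth_step_def
      using DERIV_cdivide[OF deriv_seqD[OF deriv_seq_bump, of m x]] by simp
  qed
qed

lemma smooth_step_nonpos: "x \<le> 0 \<Longrightarrow> smooth_step n x = 0"
  by (simp add: smooth_step_def step_primitive_nonpos bump_outside)

lemma smooth_step_0_ge_1: "1 \<le> x \<Longrightarrow> smooth_step 0 x = 1"
  using step_primitive_1_pos step_primitive_ge_1[of x] by (simp add: smooth_step_def)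

lemma smooth_step_Suc_outside: "x \<le> 0 \<or> 1 \<le> x \<Longrightarrow> smooth_step (Suc n) x = 0"
  by (simp add: smooth_step_def bump_outside)

lemma smooth_step_0_bounds: "0 \<le> smooth_step 0 x" "smooth_step 0 x \<le> 1"
proof -
  have "0 \<le> step_primitive x"
    using step_primitive_mono[of 0 x] step_primitive_nonpos[of x] step_primitive_nonpos[of 0]
    by (cases "0 \<le> x") auto
  moreover have "step_primitive x \<le> step_primitive 1"
    using step_primitive_mono[of x 1] step_primitive_ge_1[of x] by (cases "x \<le> 1") auto
  ultimately show "0 \<le> smooth_step 0 x" "smooth_step 0 x \<le> 1"
    using step_primitive_1_pos by (simp_all add: smooth_step_def)
qed

lemma smooth_step_clamp: "smooth_step n x = smooth_step n (max 0 (min 1 x))"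
  by (cases n)
     (auto simp: max_def min_def smooth_step_nonpos smooth_step_0_ge_1 smooth_step_Suc_outside)

definition step_bound :: "nat \<Rightarrow> real" where
  "step_bound n = (SUP x. \<bar>smooth_step n x\<bar>)"

lemma abs_smooth_step_le: "\<bar>smooth_step n x\<bar> \<le> step_bound n"
proof -
  have "compact ((\<lambda>x. \<bar>smooth_step n x\<bar>) ` {0..1})"
    by (intro compact_continuous_image continuous_intros deriv_seq_continuous_on[OF deriv_seq_smooth_step])
       simp
  moreover have "range (\<lambda>x. \<bar>smooth_step n x\<bar>) \<subseteq> (\<lambda>x. \<bar>smooth_step n x\<bar>) ` {0..1}"
    by (subst smooth_step_clamp) auto
  ultimately have "bdd_above (range (\<lambda>x. \<bar>smooth_step n x\<bar>))"
    by (meson bdd_above_mono bounded_imp_bdd_above compact_imp_bounded)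
  then show ?thesis unfolding step_bound_def by (rule cSUP_upper[OF UNIV_I])
qed

section \<open>Weak derivatives tested against smooth functions\<close>

lemma deriv_seq_vanishes_outside:
  assumes "deriv_seq F" "\<And>x. x \<notin> {a..b} \<Longrightarrow> F 0 x = 0" "x \<notin> {a..b}"
  shows "F n x = 0"
  using deriv_seq_vanishes_on_open[of F "- {a..b}" x n] assms by auto

lemma test_fun_deriv_seq:
  assumes F: "deriv_seq F" and ab: "0 < a" "a \<le> b" "b < R"
    and supp: "\<And>x. x \<notin> {a..b} \<Longrightarrow> F 0 x = 0"
  shows "test_fun R (F j)"
proof -
  have F': "deriv_seq (\<lambda>n. F (n + j))" by (rule deriv_seq_shift[OF F])
  have "((deriv ^^ n) (F j)) differentiable (at x)" for n x
    using deriv_seqD[OF F', of n x] deriv_seq_funpow_deriv[OF F', of n]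
    by (auto simp: real_differentiable_def)
  then show ?thesis
    unfolding test_fun_def using ab deriv_seq_vanishes_outside[OF F supp] by blast
qed

lemma weak_deriv_iterated:
  assumes chain: "\<forall>j<k. weak_deriv_on R (vs j) (vs (Suc j))" and "j \<le> k"
    and F: "deriv_seq F" and ab: "0 < a" "a \<le> b" "b < R"
    and supp: "\<And>x. x \<notin> {a..b} \<Longrightarrow> F 0 x = 0"
  shows "(LBINT s:{0<..<R}. vs 0 s * F j s) = (-1) ^ j * (LBINT s:{0<..<R}. vs j s * F 0 s)"
  using \<open>j \<le> k\<close> F supp
proof (induction j arbitrary: F)
  case (Suc j)
  have F': "deriv_seq (\<lambda>n. F (n + 1))" by (rule deriv_seq_shift[OF Suc.prems(2)])
  have supp': "F 1 x = 0" if "x \<notin> {a..b}" for x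
    using deriv_seq_vanishes_outside[OF Suc.prems(2,3) that] .
  have "(LBINT s:{0<..<R}. vs 0 s * F (Suc j) s) = (-1) ^ j * (LBINT s:{0<..<R}. vs j s * F 1 s)"
    using Suc.IH[OF _ F'] Suc.prems(1) supp' by simp
  also have "(LBINT s:{0<..<R}. vs j s * F 1 s) = (LBINT s:{0<..<R}. vs j s * deriv (F 0) s)"
    by (simp add: deriv_seq_deriv[OF Suc.prems(2)])
  also have "\<dots> = - (LBINT s:{0<..<R}. vs (Suc j) s * F 0 s)"
    using chain Suc.prems(1) test_fun_deriv_seq[OF Suc.prems(2) ab Suc.prems(3), of 0]
    unfolding weak_deriv_on_def by auto
  finally show ?case by simp
qed simp

lemma weak_deriv_chain_set_integrable:
  assumes chain: "\<forall>j<k. weak_deriv_on R (vs j) (vs (Suc j))"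
    and "1 \<le> k" "j \<le> k" "0 < a" "b < R"
  shows "set_integrable lborel {a..b} (vs j)"
proof (cases "j < k")
  case True
  then show ?thesis using chain assms(4,5) unfolding weak_deriv_on_def by blast
next
  case False
  then have "k - 1 < k" "j = Suc (k - 1)" using assms(2,3) by auto
  then show ?thesis using chain assms(4,5) unfolding weak_deriv_on_def by metis
qed

lemma set_integral_deriv_seq:
  assumes F: "deriv_seq F" and "a \<le> b"
  shows "(LBINT x:{a..b}. F (Suc j) x) = F j b - F j a"
  unfolding set_lebesgue_integral_def
proof (rule integral_FTC_atLeastAtMost[OF \<open>a \<le> b\<close>])
  show "continuous_on {a..b} (F (Suc j))" by (rule deriv_seq_continuous_on[OF F])
  show "(F j has_vector_derivative F (Suc j) x) (at x within {a..b})" for x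
    using deriv_seqD[OF F, of j x]
    by (simp add: has_real_derivative_iff_has_vector_derivative has_vector_derivative_at_within)
qed

lemma set_integrable_mult_continuous:
  fixes f g :: "real \<Rightarrow> real"
  assumes f: "set_integrable lborel {a..b} f" and g: "continuous_on {a..b} g"
  shows "set_integrable lborel {a..b} (\<lambda>x. f x * g x)"
proof -
  obtain K where K: "\<forall>x\<in>{a..b}. \<bar>g x\<bar> \<le> K"
    using compact_imp_bounded[OF compact_continuous_image[OF g compact_Icc]]
    by (auto simp: bounded_iff)
  show ?thesis
  proof (rule set_integrable_bound[where f = "\<lambda>x. K * f x"])
    show "set_integrable lborel {a..b} (\<lambda>x. K * f x)" using f by simp
    have "(\<lambda>x. indicator {a..b} x *\<^sub>R f x) \<in> borel_measurable lborel"
      using f unfolding set_integrable_def by (rule borel_measurable_integrable)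
    moreover have "(\<lambda>x. indicator {a..b} x *\<^sub>R g x) \<in> borel_measurable lborel"
      using borel_measurable_continuous_on_indicator[OF _ g] by simp
    ultimately have "(\<lambda>x. (indicator {a..b} x *\<^sub>R f x) * (indicator {a..b} x *\<^sub>R g x)) \<in> borel_measurable lborel"
      by measurable
    then show "set_borel_measurable lborel {a..b} (\<lambda>x. f x * g x)"
      unfolding set_borel_measurable_def by (rule measurable_cong[THEN iffD1, rotated])
         (auto simp: indicator_def)
    show "AE x in lborel. x \<in> {a..b} \<longrightarrow> norm (f x * g x) \<le> norm (K * f x)"
    proof (intro AE_I2 impI)
      fix x assume "x \<in> {a..b}"
      then have "\<bar>g x\<bar> \<le> \<bar>K\<bar>" using K by force
      then show "norm (f x * g x) \<le> norm (K * f x)"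
        by (simp add: abs_mult mult.commute[of "\<bar>K\<bar>"] mult_left_mono)
    qed
  qed
qed

section \<open>Point values from weak derivatives\<close>

lemma abs_eq_1_cases: "\<bar>\<sigma>\<bar> = (1::real) \<Longrightarrow> \<sigma> = 1 \<or> \<sigma> = -1"
  by (auto simp: abs_if split: if_splits)

text \<open>\<open>step_at \<sigma> t \<epsilon> 0\<close> rises from 0 to 1 as \<open>\<sigma> * (s - t)\<close> goes from 0 to \<open>\<epsilon>\<close>;
  the sign \<open>\<sigma>\<close> selects the side of \<open>t\<close>.\<close>

definition step_at :: "real \<Rightarrow> real \<Rightarrow> real \<Rightarrow> nat \<Rightarrow> real \<Rightarrow> real" where
  "step_at \<sigma> t \<epsilon> n s = (\<sigma> / \<epsilon>) ^ n * smooth_step n (\<sigma> / \<epsilon> * (s - t))"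

lemma deriv_seq_step_at: "deriv_seq (step_at \<sigma> t \<epsilon>)"
  using deriv_seq_affine[OF deriv_seq_smooth_step, of "\<sigma> / \<epsilon>" "- (\<sigma> / \<epsilon> * t)"]
  by (simp add: step_at_def[abs_def] right_diff_distrib)

lemma step_at_nonpos:
  assumes "0 < \<epsilon>" "\<sigma> * (s - t) \<le> 0"
  shows "step_at \<sigma> t \<epsilon> n s = 0"
proof -
  have "\<sigma> * (s - t) / \<epsilon> \<le> 0" using assms by (simp add: divide_nonpos_pos)
  then show ?thesis by (simp add: step_at_def smooth_step_nonpos)
qed

lemma step_at_0_eq_1: "0 < \<epsilon> \<Longrightarrow> \<epsilon> \<le> \<sigma> * (s - t) \<Longrightarrow> step_at \<sigma> t \<epsilon> 0 s = 1"
  by (simp add: step_at_def smooth_step_0_ge_1)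

lemma step_at_Suc_outside:
  assumes "0 < \<epsilon>" "\<sigma> * (s - t) \<le> 0 \<or> \<epsilon> \<le> \<sigma> * (s - t)"
  shows "step_at \<sigma> t \<epsilon> (Suc n) s = 0"
proof -
  have "\<sigma> * (s - t) / \<epsilon> \<le> 0 \<or> 1 \<le> \<sigma> * (s - t) / \<epsilon>"
    using assms by (auto simp: divide_nonpos_pos)
  then show ?thesis by (simp add: step_at_def smooth_step_Suc_outside)
qed

lemma abs_step_at_le:
  assumes "\<bar>\<sigma>\<bar> = 1" "0 < \<epsilon>"
  shows "\<bar>step_at \<sigma> t \<epsilon> n s\<bar> \<le> step_bound n / \<epsilon> ^ n"
proof -
  have "\<bar>step_at \<sigma> t \<epsilon> n s\<bar> = \<bar>smooth_step n (\<sigma> / \<epsilon> * (s - t))\<bar> / \<epsilon> ^ n"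
    using assms by (simp add: step_at_def abs_mult power_abs power_divide)
  also have "\<dots> \<le> step_bound n / \<epsilon> ^ n"
    using assms(2) by (intro divide_right_mono abs_smooth_step_le) simp
  finally show ?thesis .
qed

lemma step_at_tendsto_1:
  assumes "\<epsilon> \<longlonglongrightarrow> 0" "\<And>n. 0 < \<epsilon> n" "0 < \<sigma> * (s - t)"
  shows "(\<lambda>n. step_at \<sigma> t (\<epsilon> n) 0 s) \<longlonglongrightarrow> 1"
proof (rule tendsto_eventually)
  show "\<forall>\<^sub>F n in sequentially. step_at \<sigma> t (\<epsilon> n) 0 s = 1"
    using order_tendstoD(2)[OF assms(1,3)] by eventually_elim (use assms(2) step_at_0_eq_1 in auto)
qed

lemma step_at_leibniz_tail_vanishes:
  assumes "\<bar>\<sigma>\<bar> = 1" "0 < \<epsilon>" "\<epsilon> < \<bar>s - t\<bar>"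
  shows "leibniz_tail (step_at \<sigma> t \<epsilon>) G k s = 0"
  unfolding leibniz_tail_def
proof (intro sum.neutral ballI)
  fix i assume "i \<in> {1..k}"
  then obtain j where j: "i = Suc j" by (cases i) auto
  have "\<bar>\<sigma> * (s - t)\<bar> = \<bar>s - t\<bar>" using assms(1) by (simp add: abs_mult)
  then have "\<sigma> * (s - t) \<le> 0 \<or> \<epsilon> \<le> \<sigma> * (s - t)" using assms(3) by linarith
  then show "real (k choose i) * step_at \<sigma> t \<epsilon> i s * G (k - i) s = 0"
    using step_at_Suc_outside[OF assms(2)] by (simp add: j)
qed

lemma step_at_leibniz_tail_bound:
  assumes \<sigma>: "\<bar>\<sigma>\<bar> = 1" and \<epsilon>: "0 < \<epsilon>" "\<epsilon> \<le> 1" and G: "deriv_seq G"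
    and flat: "\<And>j. j < k - 1 \<Longrightarrow> G j t = 0"
    and B: "\<And>s. \<bar>s - t\<bar> \<le> 1 \<Longrightarrow> \<bar>G (k - 1) s\<bar> \<le> B"
  shows "\<bar>leibniz_tail (step_at \<sigma> t \<epsilon>) G k s\<bar> \<le> (\<Sum>i\<in>{1..k}. real (k choose i) * step_bound i) * B / \<epsilon>"
proof (cases "\<bar>s - t\<bar> \<le> \<epsilon>")
  case True
  have B0: "0 \<le> B" using B[of t] by simp
  have summand: "\<bar>step_at \<sigma> t \<epsilon> i s * G (k - i) s\<bar> \<le> step_bound i * B / \<epsilon>"
    if i: "i \<in> {1..k}" for i
  proof -
    obtain j where j: "i = Suc j" using i by (cases i) auto
    have "\<bar>G (k - 1 - j) s\<bar> \<le> B * \<bar>s - t\<bar> ^ j / fact j"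
      by (rule deriv_seq_taylor_bound[OF G flat B]) (use i j True \<epsilon> in auto)
    also have "\<dots> \<le> B * \<bar>s - t\<bar> ^ j"
      using mult_left_mono[OF fact_ge_1[of j, where 'a = real], of "B * \<bar>s - t\<bar> ^ j"] B0
      by (simp add: divide_le_eq)
    also have "\<dots> \<le> B * \<epsilon> ^ j"
      using B0 True by (intro mult_left_mono power_mono) auto
    finally have "\<bar>G (k - i) s\<bar> \<le> B * \<epsilon> ^ j"
      using i j by (simp add: diff_diff_eq2)
    then have "\<bar>step_at \<sigma> t \<epsilon> i s * G (k - i) s\<bar> \<le> step_bound i / \<epsilon> ^ i * (B * \<epsilon> ^ j)"
      unfolding abs_mult using B0 \<epsilon> abs_smooth_step_le[of i 0]
      by (intro mult_mono abs_step_at_le[OF \<sigma> \<epsilon>(1)]) auto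
    also have "\<dots> = step_bound i * B / \<epsilon>"
      using \<epsilon>(1) by (simp add: j field_simps)
    finally show ?thesis .
  qed
  have "\<bar>leibniz_tail (step_at \<sigma> t \<epsilon>) G k s\<bar> \<le> (\<Sum>i\<in>{1..k}. real (k choose i) * (step_bound i * B / \<epsilon>))"
    unfolding leibniz_tail_def
  proof (rule order_trans[OF sum_abs sum_mono])
    fix i assume "i \<in> {1..k}"
    from mult_left_mono[OF summand[OF this], of "real (k choose i)"]
    show "\<bar>real (k choose i) * step_at \<sigma> t \<epsilon> i s * G (k - i) s\<bar>
        \<le> real (k choose i) * (step_bound i * B / \<epsilon>)"
      by (simp add: abs_mult mult.assoc)
  qed
  then show ?thesis by (simp add: sum_divide_distrib sum_distrib_right mult.assoc)
next
  case False
  have "0 \<le> B" using B[of t] by simp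
  moreover have "0 \<le> step_bound i" for i using abs_smooth_step_le[of i 0] by simp
  ultimately show ?thesis
    using step_at_leibniz_tail_vanishes[OF \<sigma> \<epsilon>(1)] False \<epsilon>(1) by (simp add: sum_nonneg)
qed

lemma set_integral_concentrating_tendsto_0:
  fixes f :: "real \<Rightarrow> real" and D :: "nat \<Rightarrow> real \<Rightarrow> real"
  assumes f: "isCont f t" and \<epsilon>: "\<epsilon> \<longlonglongrightarrow> 0" "\<And>n. 0 < \<epsilon> n"
    and bound: "\<And>n s. \<bar>D n s\<bar> \<le> M / \<epsilon> n"
    and supp: "\<And>n s. \<epsilon> n < \<bar>s - t\<bar> \<Longrightarrow> D n s = 0"
    and int: "\<And>n. set_integrable lborel J (\<lambda>s. (f s - f t) * D n s)"
  shows "(\<lambda>n. LBINT s:J. (f s - f t) * D n s) \<longlonglongrightarrow> 0"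
proof (rule LIMSEQ_I)
  fix r :: real assume "0 < r"
  have M0: "0 \<le> M"
    using order_trans[OF abs_ge_zero bound[of 0 t]] \<epsilon>(2)[of 0] by (simp add: zero_le_divide_iff)
  define \<eta> where "\<eta> = r / (2 * M + 1)"
  have \<eta>: "0 < \<eta>" "2 * \<eta> * M < r"
    using \<open>0 < r\<close> M0 by (auto simp: \<eta>_def field_simps)
  obtain \<delta> where "0 < \<delta>" and \<delta>: "\<And>s. \<bar>s - t\<bar> < \<delta> \<Longrightarrow> \<bar>f s - f t\<bar> < \<eta>"
    using f \<eta>(1) unfolding continuous_at_eps_delta dist_real_def by blast
  show "\<exists>n0. \<forall>n\<ge>n0. norm ((LBINT s:J. (f s - f t) * D n s) - 0) < r"
  proof -
    obtain n0 where n0: "\<And>n. n0 \<le> n \<Longrightarrow> \<epsilon> n < \<delta>"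
      using order_tendstoD(2)[OF \<epsilon>(1) \<open>0 < \<delta>\<close>] unfolding eventually_sequentially by blast
    have "\<bar>LBINT s:J. (f s - f t) * D n s\<bar> \<le> 2 * \<eta> * M" if "n0 \<le> n" for n
    proof -
      define c where "c = \<eta> * M / \<epsilon> n"
      define I where "I = {t - \<epsilon> n..t + \<epsilon> n}"
      have pointwise: "indicator J s * \<bar>(f s - f t) * D n s\<bar> \<le> c * indicator I s" for s
      proof (cases "\<bar>s - t\<bar> \<le> \<epsilon> n")
        case True
        then have "\<bar>f s - f t\<bar> \<le> \<eta>" using \<delta>[of s] n0[OF that] by simp
        then have "\<bar>(f s - f t) * D n s\<bar> \<le> \<eta> * (M / \<epsilon> n)"
          unfolding abs_mult using \<eta>(1) bound[of n s] by (intro mult_mono) auto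
        moreover have "s \<in> I" using True by (auto simp: I_def)
        ultimately show ?thesis using M0 \<eta>(1) \<epsilon>(2)[of n] by (simp add: c_def indicator_def)
      next
        case False
        then show ?thesis using supp[of n s] M0 \<eta>(1) \<epsilon>(2)[of n] by (simp add: c_def indicator_def)
      qed
      have "\<bar>LBINT s:J. (f s - f t) * D n s\<bar> \<le> (LBINT s:J. \<bar>(f s - f t) * D n s\<bar>)"
        using set_integral_norm_bound[OF int] by simp
      also have "\<dots> \<le> integral\<^sup>L lborel (\<lambda>s. c * indicator I s)"
        unfolding set_lebesgue_integral_def
      proof (rule integral_mono)
        show "integrable lborel (\<lambda>s. indicator J s *\<^sub>R \<bar>(f s - f t) * D n s\<bar>)"
          using set_integrable_abs[OF int] by (simp add: set_integrable_def)
        show "integrable lborel (\<lambda>s. c * indicator I s)"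
          unfolding I_def
          by (intro integrable_mult_right integrable_real_indicator) (auto simp: emeasure_lborel_Icc_eq)
      qed (use pointwise in simp)
      also have "\<dots> = 2 * \<eta> * M"
        using \<epsilon>(2)[of n] by (simp add: c_def I_def)
      finally show ?thesis .
    qed
    then show ?thesis using \<eta>(2) by (intro exI[of _ n0]) (auto intro: le_less_trans)
  qed
qed

lemma set_integral_step_at_tendsto:
  fixes f :: "real \<Rightarrow> real"
  assumes f: "set_integrable lborel J f" and \<epsilon>: "\<epsilon> \<longlonglongrightarrow> 0" "\<And>n. 0 < \<epsilon> n"
    and side: "\<And>s. s \<in> J \<Longrightarrow> s \<noteq> t \<Longrightarrow> 0 < \<sigma> * (s - t)"
  shows "(\<lambda>n. LBINT s:J. f s * step_at \<sigma> t (\<epsilon> n) 0 s) \<longlonglongrightarrow> (LBINT s:J. f s)"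
  unfolding set_lebesgue_integral_def
proof (rule integral_dominated_convergence[where w = "\<lambda>s. norm (indicator J s *\<^sub>R f s)"])
  have mf: "(\<lambda>s. indicator J s *\<^sub>R f s) \<in> borel_measurable lborel"
    using f unfolding set_integrable_def by (rule borel_measurable_integrable)
  then show "(\<lambda>s. indicator J s *\<^sub>R f s) \<in> borel_measurable lborel" .
  show "(\<lambda>s. indicator J s *\<^sub>R (f s * step_at \<sigma> t (\<epsilon> n) 0 s)) \<in> borel_measurable lborel" for n
  proof -
    have "step_at \<sigma> t (\<epsilon> n) 0 \<in> borel_measurable lborel"
      by (simp add: borel_measurable_continuous_onI deriv_seq_continuous_on deriv_seq_step_at)
    from borel_measurable_times[OF mf this] show ?thesis by (simp add: mult.assoc)
  qed
  show "integrable lborel (\<lambda>s. norm (indicator J s *\<^sub>R f s))"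
    using f unfolding set_integrable_def by simp
  show "AE s in lborel. (\<lambda>n. indicator J s *\<^sub>R (f s * step_at \<sigma> t (\<epsilon> n) 0 s))
      \<longlonglongrightarrow> indicator J s *\<^sub>R f s"
    using AE_lborel_singleton[of t]
  proof eventually_elim
    case (elim s)
    show ?case
    proof (cases "s \<in> J")
      case True
      then show ?thesis
        using tendsto_mult_left[OF step_at_tendsto_1[OF \<epsilon> side[OF True elim]], of "f s"] by simp
    qed simp
  qed
  show "AE s in lborel. norm (indicator J s *\<^sub>R (f s * step_at \<sigma> t (\<epsilon> n) 0 s))
      \<le> norm (indicator J s *\<^sub>R f s)" for n
  proof (intro AE_I2)
    fix s
    have "\<bar>step_at \<sigma> t (\<epsilon> n) 0 s\<bar> \<le> 1"
      using smooth_step_0_bounds[of "\<sigma> / \<epsilon> n * (s - t)"] by (simp add: step_at_def)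
    then have "\<bar>f s\<bar> * \<bar>step_at \<sigma> t (\<epsilon> n) 0 s\<bar> \<le> \<bar>f s\<bar>"
      by (simp add: mult_left_le)
    then show "norm (indicator J s *\<^sub>R (f s * step_at \<sigma> t (\<epsilon> n) 0 s)) \<le> norm (indicator J s *\<^sub>R f s)"
      by (simp add: abs_mult indicator_def)
  qed
qed

lemma set_integral_closed_segment_deriv_seq:
  assumes F: "deriv_seq F" and \<sigma>: "\<bar>\<sigma>\<bar> = 1" and "0 < \<sigma> * (e - t)"
  shows "(LBINT s:closed_segment t e. F (Suc j) s) = \<sigma> * (F j e - F j t)"
  using abs_eq_1_cases[OF \<sigma>] assms(3) set_integral_deriv_seq[OF F, of t e j] set_integral_deriv_seq[OF F, of e t j]
  by (auto simp: closed_segment_eq_real_ivl)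

lemma set_integral_restrict_support:
  fixes f :: "real \<Rightarrow> real"
  assumes "J \<subseteq> A" "\<And>s. s \<notin> J \<Longrightarrow> f s = 0"
  shows "(LBINT s:A. f s) = (LBINT s:J. f s)"
  unfolding set_lebesgue_integral_def
  by (rule Bochner_Integration.integral_cong) (use assms in \<open>auto simp: indicator_def\<close>)

lemma weak_deriv_iterated_on_interval:
  assumes chain: "\<forall>j<k. weak_deriv_on R (vs j) (vs (Suc j))" and "j \<le> k"
    and F: "deriv_seq F" and ab: "0 < a" "a \<le> b" "b < R"
    and supp: "\<And>x. x \<notin> {a..b} \<Longrightarrow> F 0 x = 0"
  shows "(LBINT s:{a..b}. vs 0 s * F j s) = (-1) ^ j * (LBINT s:{a..b}. vs j s * F 0 s)"
proof -
  have restrict: "(LBINT s:{0<..<R}. vs i s * F n s) = (LBINT s:{a..b}. vs i s * F n s)" for i n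
    by (rule set_integral_restrict_support) (use ab deriv_seq_vanishes_outside[OF F supp] in auto)
  show ?thesis
    using weak_deriv_iterated[OF chain \<open>j \<le> k\<close> F ab supp] unfolding restrict .
qed

lemma leibniz_step_at_vanishes_outside:
  assumes \<sigma>: "\<bar>\<sigma>\<bar> = 1" and "0 < \<sigma> * (e - t)" "0 < \<epsilon>"
    and Ge: "\<And>j s. 0 \<le> \<sigma> * (s - e) \<Longrightarrow> G j s = 0" and s: "s \<notin> {min t e<..<max t e}"
  shows "leibniz (step_at \<sigma> t \<epsilon>) G n s = 0"
proof -
  have "\<sigma> * (s - t) \<le> 0 \<or> 0 \<le> \<sigma> * (s - e)"
    using abs_eq_1_cases[OF \<sigma>] assms(2) s by auto
  then show ?thesis
  proof
    assume "\<sigma> * (s - t) \<le> 0"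
    then show ?thesis by (simp add: leibniz_def step_at_nonpos[OF \<open>0 < \<epsilon>\<close>])
  qed (simp add: leibniz_def Ge)
qed

text \<open>Integration by parts against the test function \<open>leibniz H G\<close>. Its \<open>k\<close>-th derivative is
  \<open>G\<^sub>k H + D\<close>; as \<open>D\<close> integrates to \<open>-\<integral> G\<^sub>k H\<close>, the identity can be written with
  \<open>v - v(t)\<close> in front of \<open>D\<close>, a term that vanishes in the limit \<open>\<epsilon> \<rightarrow> 0\<close>.\<close>

lemma weak_deriv_step_identity:
  assumes chain: "\<forall>j<k. weak_deriv_on R (vs j) (vs (Suc j))" and k: "1 \<le> k"
    and \<sigma>: "\<bar>\<sigma>\<bar> = 1" and te: "t \<in> {0<..<R}" "e \<in> {0<..<R}" "0 < \<sigma> * (e - t)"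
    and \<epsilon>: "0 < \<epsilon>" and G: "deriv_seq G" and Ge: "\<And>j s. 0 \<le> \<sigma> * (s - e) \<Longrightarrow> G j s = 0"
  defines "J \<equiv> closed_segment t e" and "H \<equiv> step_at \<sigma> t \<epsilon>"
    and "D \<equiv> leibniz_tail (step_at \<sigma> t \<epsilon>) G k"
  shows "(LBINT s:J. vs 0 s * G k s * H 0 s) + (LBINT s:J. (vs 0 s - vs 0 t) * D s)
           - vs 0 t * (LBINT s:J. G k s * H 0 s)
         = (-1) ^ k * (LBINT s:J. vs k s * G 0 s * H 0 s)"
proof -
  define a b where "a = min t e" and "b = max t e"
  have J: "J = {a..b}" unfolding J_def a_def b_def by (simp add: closed_segment_eq_real_ivl)
  have ab: "0 < a" "a \<le> b" "b < R" using te by (auto simp: a_def b_def)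
  define \<Phi> where "\<Phi> = leibniz H G"
  have \<Phi>: "deriv_seq \<Phi>" unfolding \<Phi>_def H_def by (intro deriv_seq_leibniz deriv_seq_step_at G)
  have \<Phi>_outside: "\<Phi> n s = 0" if "s \<notin> {a<..<b}" for n s
    unfolding \<Phi>_def H_def a_def b_def
    by (rule leibniz_step_at_vanishes_outside[OF \<sigma> te(3) \<epsilon> Ge]) (use that in \<open>auto simp: a_def b_def\<close>)
  have \<Phi>k: "\<Phi> k s = G k s * H 0 s + D s" for s
    by (simp add: \<Phi>_def D_def H_def leibniz_eq_tail mult.commute)
  have cont: "continuous_on J (\<lambda>s. G i s * H 0 s)" "continuous_on J D" for i
    unfolding D_def H_def leibniz_tail_def
    by (intro continuous_intros deriv_seq_continuous_on[OF G] deriv_seq_continuous_on[OF deriv_seq_step_at])+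
  have vint: "set_integrable lborel J (vs j)" if "j \<le> k" for j
    unfolding J by (rule weak_deriv_chain_set_integrable[OF chain k that ab(1,3)])
  have ints: "set_integrable lborel J (\<lambda>s. vs 0 s * G k s * H 0 s)" "set_integrable lborel J (\<lambda>s. vs 0 s * D s)"
    "set_integrable lborel J (\<lambda>s. G k s * H 0 s)" "set_integrable lborel J D"
    using set_integrable_mult_continuous[OF vint[unfolded J] cont(1)[unfolded J]]
      set_integrable_mult_continuous[OF vint[unfolded J] cont(2)[unfolded J]] cont
    by (auto simp: J mult.assoc intro: borel_integrable_atLeastAtMost')
  have "(LBINT s:J. vs 0 s * G k s * H 0 s) + (LBINT s:J. vs 0 s * D s) = (LBINT s:J. vs 0 s * \<Phi> k s)"
    using ints by (simp add: \<Phi>k distrib_left mult.assoc)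
  also have "\<dots> = (-1) ^ k * (LBINT s:J. vs k s * \<Phi> 0 s)"
    unfolding J by (rule weak_deriv_iterated_on_interval[OF chain order_refl \<Phi> ab]) (use \<Phi>_outside in auto)
  also have "\<dots> = (-1) ^ k * (LBINT s:J. vs k s * G 0 s * H 0 s)"
    by (simp add: \<Phi>_def mult_ac)
  finally have weak: "(LBINT s:J. vs 0 s * G k s * H 0 s) + (LBINT s:J. vs 0 s * D s)
      = (-1) ^ k * (LBINT s:J. vs k s * G 0 s * H 0 s)" .
  have "(LBINT s:J. G k s * H 0 s) + (LBINT s:J. D s) = (LBINT s:J. \<Phi> (Suc (k - 1)) s)"
    using k ints by (simp add: \<Phi>k)
  also have "\<dots> = \<Phi> (k - 1) b - \<Phi> (k - 1) a"
    unfolding J by (rule set_integral_deriv_seq[OF \<Phi> ab(2)])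
  also have "\<dots> = 0" using \<Phi>_outside by simp
  finally have "vs 0 t * (LBINT s:J. D s) = - vs 0 t * (LBINT s:J. G k s * H 0 s)"
    by (simp add: eq_neg_iff_add_eq_0 flip: distrib_left)
  moreover have "(LBINT s:J. (vs 0 s - vs 0 t) * D s) = (LBINT s:J. vs 0 s * D s) - vs 0 t * (LBINT s:J. D s)"
    using ints by (simp add: left_diff_distrib)
  ultimately show ?thesis using weak by simp
qed

lemma set_integral_leibniz_tail_tendsto_0:
  fixes f :: "real \<Rightarrow> real"
  assumes f: "isCont f t" "set_integrable lborel {a..b} f" and \<sigma>: "\<bar>\<sigma>\<bar> = 1"
    and \<epsilon>: "\<epsilon> \<longlonglongrightarrow> 0" "\<And>n. 0 < \<epsilon> n" "\<And>n. \<epsilon> n \<le> 1"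
    and G: "deriv_seq G" and flat: "\<And>j. j < k - 1 \<Longrightarrow> G j t = 0"
  shows "(\<lambda>n. LBINT s:{a..b}. (f s - f t) * leibniz_tail (step_at \<sigma> t (\<epsilon> n)) G k s) \<longlonglongrightarrow> 0"
proof -
  obtain B where B: "\<forall>s\<in>{t - 1..t + 1}. \<bar>G (k - 1) s\<bar> \<le> B"
    using compact_imp_bounded[OF compact_continuous_image[OF deriv_seq_continuous_on[OF G] compact_Icc],
        of "k - 1" "t - 1" "t + 1"]
    unfolding bounded_iff by auto
  show ?thesis
  proof (rule set_integral_concentrating_tendsto_0[OF f(1) \<epsilon>(1,2)])
    show "\<bar>leibniz_tail (step_at \<sigma> t (\<epsilon> n)) G k s\<bar>
        \<le> (\<Sum>i\<in>{1..k}. real (k choose i) * step_bound i) * B / \<epsilon> n" for n s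
      by (rule step_at_leibniz_tail_bound[OF \<sigma> \<epsilon>(2,3) G flat]) (use B in \<open>auto simp: abs_le_iff\<close>)
    show "leibniz_tail (step_at \<sigma> t (\<epsilon> n)) G k s = 0" if "\<epsilon> n < \<bar>s - t\<bar>" for n s
      by (rule step_at_leibniz_tail_vanishes[OF \<sigma> \<epsilon>(2) that])
    have "set_integrable lborel {a..b} (\<lambda>s. f s - f t)"
      using f(2) borel_integrable_atLeastAtMost'[of a b "\<lambda>_. f t"] by simp
    then show "set_integrable lborel {a..b} (\<lambda>s. (f s - f t) * leibniz_tail (step_at \<sigma> t (\<epsilon> n)) G k s)"
      for n
      unfolding leibniz_tail_def by (rule set_integrable_mult_continuous)
         (intro continuous_intros deriv_seq_continuous_on[OF G] deriv_seq_continuous_on[OF deriv_seq_step_at])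
  qed
qed

lemma weak_deriv_representation:
  assumes chain: "\<forall>j<k. weak_deriv_on R (vs j) (vs (Suc j))" and k: "1 \<le> k"
    and cont: "isCont (vs 0) t" and \<sigma>: "\<bar>\<sigma>\<bar> = 1"
    and te: "t \<in> {0<..<R}" "e \<in> {0<..<R}" "0 < \<sigma> * (e - t)"
    and G: "deriv_seq G" and Ge: "\<And>j s. 0 \<le> \<sigma> * (s - e) \<Longrightarrow> G j s = 0"
    and flat: "\<And>j. j < k - 1 \<Longrightarrow> G j t = 0" and G1: "G (k - 1) t = 1"
  shows "vs 0 t = \<sigma> * ((-1) ^ k * (LBINT s:closed_segment t e. vs k s * G 0 s)
                        - (LBINT s:closed_segment t e. vs 0 s * G k s))"
proof -
  define J where "J = closed_segment t e"
  have J: "J = {min t e..max t e}" unfolding J_def by (simp add: closed_segment_eq_real_ivl)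
  have side: "0 < \<sigma> * (s - t)" if "s \<in> J" "s \<noteq> t" for s
    using abs_eq_1_cases[OF \<sigma>] te(3) that by (auto simp: J)
  define \<epsilon> :: "nat \<Rightarrow> real" where "\<epsilon> n = 1 / real (Suc n)" for n
  have \<epsilon>: "\<epsilon> \<longlonglongrightarrow> 0" "\<And>n. 0 < \<epsilon> n" "\<And>n. \<epsilon> n \<le> 1"
    unfolding \<epsilon>_def using LIMSEQ_Suc[OF lim_1_over_n] by auto
  define H where "H n = step_at \<sigma> t (\<epsilon> n) 0" for n
  define D where "D n = leibniz_tail (step_at \<sigma> t (\<epsilon> n)) G k" for n
  have vint: "set_integrable lborel J (vs j)" if "j \<le> k" for j
    unfolding J by (rule weak_deriv_chain_set_integrable[OF chain k that]) (use te in auto)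
  have Gint: "set_integrable lborel J (\<lambda>s. vs j s * G i s)" if "j \<le> k" for i j
    using set_integrable_mult_continuous[OF vint[OF that, unfolded J] deriv_seq_continuous_on[OF G]]
    by (simp add: J)
  have "(\<lambda>n. (LBINT s:J. vs 0 s * G k s * H n s) + (LBINT s:J. (vs 0 s - vs 0 t) * D n s)
      - vs 0 t * (LBINT s:J. G k s * H n s))
      \<longlonglongrightarrow> (LBINT s:J. vs 0 s * G k s) + 0 - vs 0 t * (LBINT s:J. G (Suc (k - 1)) s)"
  proof (intro tendsto_intros)
    show "(\<lambda>n. LBINT s:J. vs 0 s * G k s * H n s) \<longlonglongrightarrow> (LBINT s:J. vs 0 s * G k s)"
      unfolding H_def by (rule set_integral_step_at_tendsto[OF Gint \<epsilon>(1,2) side]) auto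
    show "(\<lambda>n. LBINT s:J. (vs 0 s - vs 0 t) * D n s) \<longlonglongrightarrow> 0"
      unfolding D_def J by (rule set_integral_leibniz_tail_tendsto_0[OF cont vint[unfolded J] \<sigma> \<epsilon> G flat]) simp
    have "set_integrable lborel J (G k)"
      unfolding J by (rule borel_integrable_atLeastAtMost'[OF deriv_seq_continuous_on[OF G]])
    from set_integral_step_at_tendsto[OF this \<epsilon>(1,2) side]
    show "(\<lambda>n. LBINT s:J. G k s * H n s) \<longlonglongrightarrow> (LBINT s:J. G (Suc (k - 1)) s)"
      using k by (simp add: H_def)
  qed
  also have "(\<lambda>n. (LBINT s:J. vs 0 s * G k s * H n s) + (LBINT s:J. (vs 0 s - vs 0 t) * D n s)
      - vs 0 t * (LBINT s:J. G k s * H n s)) = (\<lambda>n. (-1) ^ k * (LBINT s:J. vs k s * G 0 s * H n s))"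
    unfolding J_def H_def D_def by (intro ext weak_deriv_step_identity[OF chain k \<sigma> te \<epsilon>(2) G Ge])
  finally have "(\<lambda>n. (-1) ^ k * (LBINT s:J. vs k s * G 0 s * H n s))
      \<longlonglongrightarrow> (LBINT s:J. vs 0 s * G k s) + vs 0 t * \<sigma>"
    unfolding J_def using set_integral_closed_segment_deriv_seq[OF G \<sigma> te(3)] Ge[of e] G1 by simp
  moreover have "(\<lambda>n. (-1) ^ k * (LBINT s:J. vs k s * G 0 s * H n s))
      \<longlonglongrightarrow> (-1) ^ k * (LBINT s:J. vs k s * G 0 s)"
    unfolding H_def by (intro tendsto_intros set_integral_step_at_tendsto[OF Gint \<epsilon>(1,2) side]) auto
  ultimately have "(LBINT s:J. vs 0 s * G k s) + vs 0 t * \<sigma> = (-1) ^ k * (LBINT s:J. vs k s * G 0 s)"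
    by (rule LIMSEQ_unique)
  then show ?thesis
    using abs_eq_1_cases[OF \<sigma>] by (auto simp: J_def algebra_simps)
qed

section \<open>Hoelder estimates with hyperbolic weight\<close>

lemma Holder_inequality:
  fixes f g :: "'a \<Rightarrow> real"
  assumes pq: "1 < p" "1 < q" "1/p + 1/q = 1"
    and f: "f \<in> borel_measurable M" and g: "g \<in> borel_measurable M"
    and fp: "integrable M (\<lambda>x. \<bar>f x\<bar> powr p)" and gq: "integrable M (\<lambda>x. \<bar>g x\<bar> powr q)"
  shows "(\<integral>x. \<bar>f x * g x\<bar> \<partial>M)
           \<le> (\<integral>x. \<bar>f x\<bar> powr p \<partial>M) powr (1/p) * (\<integral>x. \<bar>g x\<bar> powr q \<partial>M) powr (1/q)"
proof -
  define P where "P = (\<integral>x. \<bar>f x\<bar> powr p \<partial>M)"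
  define Q where "Q = (\<integral>x. \<bar>g x\<bar> powr q \<partial>M)"
  have Young: "\<bar>x * y\<bar> \<le> \<bar>x\<bar> powr p / p + \<bar>y\<bar> powr q / q" for x y
    using Youngs_inequality[OF pq, of "\<bar>x\<bar>" "\<bar>y\<bar>"] by (simp add: abs_mult)
  have fg: "integrable M (\<lambda>x. \<bar>f x * g x\<bar>)"
    by (rule Bochner_Integration.integrable_bound[where f = "\<lambda>x. \<bar>f x\<bar> powr p / p + \<bar>g x\<bar> powr q / q"])
       (use fp gq f g Young in \<open>auto intro!: AE_I2 order_trans[OF _ abs_ge_self]\<close>)
  consider "P = 0" | "Q = 0" | "0 < P" "0 < Q"
    using integral_nonneg_AE[of "\<lambda>x. \<bar>f x\<bar> powr p" M] integral_nonneg_AE[of "\<lambda>x. \<bar>g x\<bar> powr q" M]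
    unfolding P_def Q_def by fastforce
  then show ?thesis
  proof cases
    case 1
    then have "AE x in M. \<bar>f x\<bar> powr p = 0" using integral_nonneg_eq_0_iff_AE[OF fp] by (simp add: P_def)
    then have "(\<integral>x. \<bar>f x * g x\<bar> \<partial>M) = 0" by (intro integral_eq_zero_AE) auto
    then show ?thesis by simp
  next
    case 2
    then have "AE x in M. \<bar>g x\<bar> powr q = 0" using integral_nonneg_eq_0_iff_AE[OF gq] by (simp add: Q_def)
    then have "(\<integral>x. \<bar>f x * g x\<bar> \<partial>M) = 0" by (intro integral_eq_zero_AE) auto
    then show ?thesis by simp
  next
    case 3
    define c where "c = P powr (1/p) * Q powr (1/q)"
    have c: "0 < c" using 3 by (simp add: c_def)
    have normalized: "\<bar>f x * g x\<bar> \<le> c * (\<bar>f x\<bar> powr p / P / p + \<bar>g x\<bar> powr q / Q / q)" for x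
    proof -
      have "\<bar>f x / P powr (1/p) * (g x / Q powr (1/q))\<bar>
          \<le> \<bar>f x / P powr (1/p)\<bar> powr p / p + \<bar>g x / Q powr (1/q)\<bar> powr q / q"
        by (rule Young)
      also have "\<dots> = \<bar>f x\<bar> powr p / P / p + \<bar>g x\<bar> powr q / Q / q"
        using 3 pq by (simp add: abs_divide powr_divide powr_powr)
      finally show ?thesis using c by (simp add: c_def abs_mult field_simps)
    qed
    have "(\<integral>x. \<bar>f x * g x\<bar> \<partial>M) \<le> (\<integral>x. c * (\<bar>f x\<bar> powr p / P / p + \<bar>g x\<bar> powr q / Q / q) \<partial>M)"
      using fg fp gq normalized by (intro integral_mono) auto
    also have "\<dots> = c * (P / P / p + Q / Q / q)"
      using fp gq by (simp add: P_def Q_def)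
    also have "\<dots> = c" using 3 pq by simp
    finally show ?thesis by (simp add: c_def P_def Q_def)
  qed
qed

lemma weighted_Holder_inequality:
  fixes f h w :: "real \<Rightarrow> real"
  assumes pq: "1 < p" "1 < q" "1/p + 1/q = 1"
    and A: "A \<in> sets borel" and f: "set_integrable lborel A f" and h: "h \<in> borel_measurable borel"
    and w: "w \<in> borel_measurable borel" "\<And>s. s \<in> A \<Longrightarrow> 0 < w s"
    and fw: "set_integrable lborel A (\<lambda>s. \<bar>f s\<bar> powr p * w s)"
    and hw: "set_integrable lborel A (\<lambda>s. \<bar>h s\<bar> powr q * w s powr (- q / p))"
  shows "(LBINT s:A. \<bar>f s * h s\<bar>)
           \<le> (LBINT s:A. \<bar>f s\<bar> powr p * w s) powr (1/p)
             * (LBINT s:A. \<bar>h s\<bar> powr q * w s powr (- q / p)) powr (1/q)"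
proof -
  define F where "F s = indicator A s * f s * w s powr (1/p)" for s
  define G where "G s = indicator A s * h s * w s powr (- 1/p)" for s
  have FG: "\<bar>F s * G s\<bar> = indicator A s * \<bar>f s * h s\<bar>" for s
  proof (cases "s \<in> A")
    case True
    have "w s powr (1/p) * w s powr (- 1/p) = 1"
      using w(2)[OF True] by (simp flip: powr_add)
    then show ?thesis using True by (simp add: F_def G_def abs_mult algebra_simps)
  qed (simp add: F_def G_def)
  have Fp: "\<bar>F s\<bar> powr p = indicator A s * (\<bar>f s\<bar> powr p * w s)" for s
    using w(2)[of s] pq(1) by (cases "s \<in> A") (simp_all add: F_def abs_mult powr_mult powr_powr)
  have Gq: "\<bar>G s\<bar> powr q = indicator A s * (\<bar>h s\<bar> powr q * w s powr (- q / p))" for s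
    using w(2)[of s] pq(2) by (cases "s \<in> A") (simp_all add: G_def abs_mult powr_mult powr_powr)
  have mf: "(\<lambda>s. indicator A s *\<^sub>R f s) \<in> borel_measurable lborel"
    using f unfolding set_integrable_def by (rule borel_measurable_integrable)
  have "(\<lambda>s. (indicator A s *\<^sub>R f s) * w s powr (1/p)) \<in> borel_measurable lborel"
    using mf w(1) by measurable
  then have mF: "F \<in> borel_measurable lborel" by (simp add: F_def[abs_def])
  have mG: "G \<in> borel_measurable lborel"
    unfolding G_def[abs_def] using A h w(1) by measurable
  have "(LBINT s:A. \<bar>f s * h s\<bar>) = (\<integral>s. \<bar>F s * G s\<bar> \<partial>lborel)"
    by (simp add: FG set_lebesgue_integral_def)
  also have "\<dots> \<le> (\<integral>s. \<bar>F s\<bar> powr p \<partial>lborel) powr (1/p) * (\<integral>s. \<bar>G s\<bar> powr q \<partial>lborel) powr (1/q)"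
    by (rule Holder_inequality[OF pq mF mG])
       (use fw hw in \<open>simp_all add: Fp Gq set_integrable_def\<close>)
  also have "\<dots> = (LBINT s:A. \<bar>f s\<bar> powr p * w s) powr (1/p)
             * (LBINT s:A. \<bar>h s\<bar> powr q * w s powr (- q / p)) powr (1/q)"
    by (simp add: Fp Gq set_lebesgue_integral_def)
  finally show ?thesis .
qed

lemma set_integral_mono_set:
  fixes f :: "real \<Rightarrow> real"
  assumes "A \<subseteq> B" "set_integrable lborel A f" "set_integrable lborel B f" "\<And>x. x \<in> B \<Longrightarrow> 0 \<le> f x"
  shows "(LBINT x:A. f x) \<le> (LBINT x:B. f x)"
  unfolding set_lebesgue_integral_def
  by (rule integral_mono) (use assms in \<open>auto simp: set_integrable_def indicator_def\<close>)

lemma wint_nonneg: "0 \<le> wint N p R w"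
  unfolding wint_def set_lebesgue_integral_def
  by (intro integral_nonneg_AE) (auto simp: indicator_def)

lemma sinh_weighted_Holder:
  fixes f h :: "real \<Rightarrow> real"
  assumes p: "1 < p" and ab: "0 < a" "b < R"
    and f: "set_integrable lborel {a..b} f"
    and fw: "set_integrable lborel {0<..<R} (\<lambda>s. \<bar>f s\<bar> powr p * sinh s powr (N - 1))"
    and h: "continuous_on UNIV h"
  shows "(LBINT s:{a..b}. \<bar>f s * h s\<bar>) \<le> wint N p R f powr (1/p)
           * (LBINT s:{a..b}. \<bar>h s\<bar> powr (p/(p-1)) * sinh s powr (-(N-1)/(p-1))) powr ((p-1)/p)"
proof -
  define q where "q = p / (p - 1)"
  have q: "1 < q" "1/p + 1/q = 1" "1/q = (p-1)/p" using p by (auto simp: q_def field_simps)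
  have sinh_pos: "0 < sinh s" if "s \<in> {a..b}" for s using that ab by auto
  have "(N - 1) * (- q / p) = -(N-1)/(p-1)"
    using p by (simp add: q_def field_simps)
  then have weight: "(sinh s powr (N - 1)) powr (- q / p) = sinh s powr (-(N-1)/(p-1))" for s
    by (simp add: powr_powr)
  have fw': "set_integrable lborel {a..b} (\<lambda>s. \<bar>f s\<bar> powr p * sinh s powr (N - 1))"
    by (rule set_integrable_subset[OF fw]) (use ab in auto)
  have "(LBINT s:{a..b}. \<bar>f s * h s\<bar>)
      \<le> (LBINT s:{a..b}. \<bar>f s\<bar> powr p * sinh s powr (N - 1)) powr (1/p)
        * (LBINT s:{a..b}. \<bar>h s\<bar> powr q * (sinh s powr (N - 1)) powr (- q / p)) powr (1/q)"
  proof (rule weighted_Holder_inequality[OF p q(1,2) _ f])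
    show "set_integrable lborel {a..b} (\<lambda>s. \<bar>h s\<bar> powr q * (sinh s powr (N - 1)) powr (- q / p))"
    proof (unfold weight, intro borel_integrable_atLeastAtMost' continuous_on_mult)
      show "continuous_on {a..b} (\<lambda>s. \<bar>h s\<bar> powr q)"
        using q by (intro continuous_on_powr' continuous_intros continuous_on_subset[OF h]) auto
      show "continuous_on {a..b} (\<lambda>s. sinh s powr (-(N-1)/(p-1)))"
        by (intro continuous_intros) (use ab in auto)
    qed
  next
    have "(\<lambda>s. sinh s :: real) \<in> borel_measurable borel"
      by (intro borel_measurable_continuous_onI continuous_intros)
    then show "(\<lambda>s. sinh s powr (N - 1)) \<in> borel_measurable borel" by measurable
  qed (use fw' sinh_pos h in \<open>auto intro: borel_measurable_continuous_onI\<close>)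
  also have "\<dots> = (LBINT s:{a..b}. \<bar>f s\<bar> powr p * sinh s powr (N - 1)) powr (1/p)
        * (LBINT s:{a..b}. \<bar>h s\<bar> powr (p/(p-1)) * sinh s powr (-(N-1)/(p-1))) powr ((p-1)/p)"
    unfolding weight q(3) by (simp add: q_def)
  also have "\<dots> \<le> wint N p R f powr (1/p)
        * (LBINT s:{a..b}. \<bar>h s\<bar> powr (p/(p-1)) * sinh s powr (-(N-1)/(p-1))) powr ((p-1)/p)"
  proof (intro mult_right_mono powr_mono2)
    show "(LBINT s:{a..b}. \<bar>f s\<bar> powr p * sinh s powr (N - 1)) \<le> wint N p R f"
      unfolding wint_def by (rule set_integral_mono_set[OF _ fw' fw]) (use ab in auto)
    show "0 \<le> (LBINT s:{a..b}. \<bar>f s\<bar> powr p * sinh s powr (N - 1))"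
      unfolding set_lebesgue_integral_def by (intro integral_nonneg_AE) (auto simp: indicator_def)
  qed (use p in auto)
  finally show ?thesis .
qed

lemma has_real_derivative_ln_tanh_half:
  assumes "0 < (s::real)"
  shows "((\<lambda>x. ln (tanh (x / 2))) has_real_derivative 1 / sinh s) (at s)"
proof -
  let ?x = "s / 2"
  have pos: "0 < sinh ?x" "0 < cosh ?x" using assms by auto
  have "((\<lambda>x. ln (tanh (x / 2))) has_real_derivative 1 / tanh ?x * ((1 - tanh ?x ^ 2) * (1/2))) (at s)"
    using pos by (auto intro!: derivative_eq_intros simp: field_simps)
  also have "1 - tanh ?x ^ 2 = (cosh ?x ^ 2 - sinh ?x ^ 2) / cosh ?x ^ 2"
    using pos by (simp add: tanh_def field_simps)
  also have "\<dots> = 1 / cosh ?x ^ 2" by (simp add: hyperbolic_pythagoras)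
  also have "1 / tanh ?x * (1 / cosh ?x ^ 2 * (1/2)) = 1 / (2 * sinh ?x * cosh ?x)"
    using pos by (simp add: tanh_def field_simps power2_eq_square)
  also have "2 * sinh ?x * cosh ?x = sinh s" using sinh_double[of ?x] by simp
  finally show ?thesis .
qed

lemma set_integral_inverse_sinh:
  fixes a b :: real
  assumes "0 < a" "a \<le> b"
  shows "(LBINT s:{a..b}. 1 / sinh s) = ln (tanh (b / 2)) - ln (tanh (a / 2))"
  unfolding set_lebesgue_integral_def
proof (rule integral_FTC_atLeastAtMost[OF assms(2)])
  show "continuous_on {a..b} (\<lambda>s::real. 1 / sinh s)"
    using assms by (intro continuous_intros) auto
  show "((\<lambda>x. ln (tanh (x / 2))) has_vector_derivative 1 / sinh x) (at x within {a..b})"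
    if "a \<le> x" "x \<le> b" for x
    using has_real_derivative_ln_tanh_half[of x] that assms
    by (simp add: has_real_derivative_iff_has_vector_derivative has_vector_derivative_at_within)
qed

lemma power_dual_weight_le_inverse_sinh:
  assumes p: "1 < p" and k: "1 \<le> k" and N: "N = real k * p" and s: "0 < s"
  shows "\<bar>s ^ (k - 1)\<bar> powr (p/(p-1)) * sinh s powr (-(N-1)/(p-1)) \<le> 1 / sinh s"
proof -
  have "s powr (real (k - 1) * (p/(p-1))) \<le> sinh s powr (real (k - 1) * (p/(p-1)))"
  proof (rule powr_mono2)
    show "s \<le> sinh s" using real_le_x_sinh[of s] s by (simp add: sinh_field_def exp_minus)
  qed (use s p in auto)
  then have "\<bar>s ^ (k - 1)\<bar> powr (p/(p-1)) * sinh s powr (-(N-1)/(p-1))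
      \<le> sinh s powr (real (k - 1) * (p/(p-1))) * sinh s powr (-(N-1)/(p-1))"
    using s by (intro mult_right_mono) (simp_all add: powr_realpow[symmetric] powr_powr)
  also have "\<dots> = sinh s powr (real (k - 1) * (p/(p-1)) + -(N-1)/(p-1))"
    by (rule powr_add[symmetric])
  also have "real (k - 1) * (p/(p-1)) + -(N-1)/(p-1) = -1"
    using p k unfolding N by (simp add: of_nat_diff field_simps)
  finally show ?thesis using s by (simp add: powr_minus divide_inverse)
qed

lemma sinh_weighted_power_bound:
  fixes f :: "real \<Rightarrow> real"
  assumes p: "1 < p" and k: "1 \<le> k" and N: "N = real k * p"
    and ab: "0 < a" "a \<le> b" "b < R"
    and f: "set_integrable lborel {a..b} f"
    and fw: "set_integrable lborel {0<..<R} (\<lambda>s. \<bar>f s\<bar> powr p * sinh s powr (N - 1))"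
  shows "(LBINT s:{a..b}. \<bar>f s * s ^ (k - 1)\<bar>)
           \<le> wint N p R f powr (1/p) * ln (tanh (R / 2) / tanh (a / 2)) powr ((p - 1) / p)"
proof -
  have weight_le: "\<bar>s ^ (k - 1)\<bar> powr (p/(p-1)) * sinh s powr (-(N-1)/(p-1)) \<le> 1 / sinh s"
    if "s \<in> {a..b}" for s
    using power_dual_weight_le_inverse_sinh[OF p k N] that ab by auto
  have "(LBINT s:{a..b}. \<bar>s ^ (k - 1)\<bar> powr (p/(p-1)) * sinh s powr (-(N-1)/(p-1)))
      \<le> (LBINT s:{a..b}. 1 / sinh s)"
  proof (rule set_integral_mono[OF _ _ weight_le])
    show "set_integrable lborel {a..b} (\<lambda>s. \<bar>s ^ (k - 1)\<bar> powr (p/(p-1)) * sinh s powr (-(N-1)/(p-1)))"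
    proof (intro borel_integrable_atLeastAtMost' continuous_on_mult)
      show "continuous_on {a..b} (\<lambda>s::real. \<bar>s ^ (k - 1)\<bar> powr (p/(p-1)))"
        using p by (intro continuous_on_powr' continuous_intros) auto
      show "continuous_on {a..b} (\<lambda>s. sinh s powr (-(N-1)/(p-1)))"
        by (intro continuous_intros) (use ab in auto)
    qed
    show "set_integrable lborel {a..b} (\<lambda>s. 1 / sinh s)"
      by (intro borel_integrable_atLeastAtMost' continuous_intros) (use ab in auto)
  qed
  also have "\<dots> = ln (tanh (b / 2) / tanh (a / 2))"
    using ab by (simp add: set_integral_inverse_sinh ln_div)
  also have "\<dots> \<le> ln (tanh (R / 2) / tanh (a / 2))"
    using ab by (simp add: divide_right_mono)
  finally have I: "(LBINT s:{a..b}. \<bar>s ^ (k - 1)\<bar> powr (p/(p-1)) * sinh s powr (-(N-1)/(p-1)))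
      \<le> ln (tanh (R / 2) / tanh (a / 2))" .
  have "0 \<le> (LBINT s:{a..b}. \<bar>s ^ (k - 1)\<bar> powr (p/(p-1)) * sinh s powr (-(N-1)/(p-1)))"
    unfolding set_lebesgue_integral_def by (intro integral_nonneg_AE) (auto simp: indicator_def)
  with I p have "(LBINT s:{a..b}. \<bar>s ^ (k - 1)\<bar> powr (p/(p-1)) * sinh s powr (-(N-1)/(p-1))) powr ((p-1)/p)
      \<le> ln (tanh (R / 2) / tanh (a / 2)) powr ((p - 1) / p)"
    by (intro powr_mono2) auto
  then have "wint N p R f powr (1/p)
        * (LBINT s:{a..b}. \<bar>s ^ (k - 1)\<bar> powr (p/(p-1)) * sinh s powr (-(N-1)/(p-1))) powr ((p-1)/p)
      \<le> wint N p R f powr (1/p) * ln (tanh (R / 2) / tanh (a / 2)) powr ((p - 1) / p)"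
    by (rule mult_left_mono) simp
  with sinh_weighted_Holder[OF p ab(1,3) f fw, of "\<lambda>s. s ^ (k - 1)"] show ?thesis
    by (simp add: continuous_on_power)
qed

section \<open>Cutoff of a Taylor monomial\<close>

definition taylor_monomial :: "nat \<Rightarrow> real \<Rightarrow> nat \<Rightarrow> real \<Rightarrow> real" where
  "taylor_monomial m t j s = (if j \<le> m then (s - t) ^ (m - j) / fact (m - j) else 0)"

lemma deriv_seq_taylor_monomial: "deriv_seq (taylor_monomial m t)"
  unfolding deriv_seq_def
proof (intro allI)
  fix j s
  show "(taylor_monomial m t j has_real_derivative taylor_monomial m t (Suc j) s) (at s)"
  proof (cases "j < m")
    case True
    then obtain r where r: "m - j = Suc r" "m - Suc j = r" by (metis Suc_diff_Suc)
    have "((\<lambda>s. (s - t) ^ Suc r / fact (Suc r)) has_real_derivative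
        real (Suc r) * (s - t) ^ r * 1 / fact (Suc r)) (at s)"
      by (intro derivative_eq_intros) auto
    moreover have "real (Suc r) * (s - t) ^ r * 1 / fact (Suc r) = (s - t) ^ r / fact r"
      by (simp add: divide_simps fact_Suc)
    ultimately have "((\<lambda>s. (s - t) ^ Suc r / fact (Suc r)) has_real_derivative (s - t) ^ r / fact r) (at s)"
      by simp
    moreover have "taylor_monomial m t j = (\<lambda>s. (s - t) ^ Suc r / fact (Suc r))"
      using True r by (intro ext) (simp add: taylor_monomial_def)
    moreover have "taylor_monomial m t (Suc j) s = (s - t) ^ r / fact r"
      using True r by (simp add: taylor_monomial_def)
    ultimately show ?thesis by simp
  next
    case False
    then have "taylor_monomial m t j = (\<lambda>_. if j = m then 1 else 0)"
      by (intro ext) (simp add: taylor_monomial_def)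
    moreover have "taylor_monomial m t (Suc j) s = 0" using False by (simp add: taylor_monomial_def)
    ultimately show ?thesis by simp
  qed
qed

lemma taylor_monomial_at: "taylor_monomial m t j t = (if j = m then 1 else 0)"
  by (simp add: taylor_monomial_def)

lemma abs_taylor_monomial_le: "\<bar>taylor_monomial m t j s\<bar> \<le> (1 + \<bar>s - t\<bar>) ^ m"
proof (cases "j \<le> m")
  case True
  have "\<bar>taylor_monomial m t j s\<bar> \<le> \<bar>s - t\<bar> ^ (m - j)"
    using True fact_ge_1[of "m - j", where 'a = real]
    by (simp add: taylor_monomial_def power_abs divide_le_eq mult_le_cancel_left1)
  also have "\<dots> \<le> (1 + \<bar>s - t\<bar>) ^ (m - j)" by (rule power_mono) auto
  also have "\<dots> \<le> (1 + \<bar>s - t\<bar>) ^ m" by (rule power_increasing) auto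
  finally show ?thesis .
qed (simp add: taylor_monomial_def)

lemma leibniz_step_at_vanishes_beyond:
  "0 < \<delta> \<Longrightarrow> 0 \<le> \<sigma> * (s - e) \<Longrightarrow> leibniz F (step_at (- \<sigma>) e \<delta>) n s = 0"
  by (simp add: leibniz_def step_at_nonpos)

lemma leibniz_step_at_plateau:
  assumes "0 < \<delta>" "\<delta> \<le> \<sigma> * (e - t)"
  shows "leibniz F (step_at (- \<sigma>) e \<delta>) n t = F n t"
proof -
  have "step_at (- \<sigma>) e \<delta> i t = (if i = 0 then 1 else 0)" for i
    using assms step_at_0_eq_1[of \<delta> "- \<sigma>" t e] step_at_Suc_outside[of \<delta> "- \<sigma>" t e]
    by (cases i) (auto simp: algebra_simps)
  then have "leibniz F (step_at (- \<sigma>) e \<delta>) n t = (\<Sum>i\<le>n. if i = n then F n t else 0)"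
    unfolding leibniz_def by (intro sum.cong) auto
  then show ?thesis by simp
qed

lemma abs_cutoff_taylor_monomial_0_le:
  "\<bar>leibniz (taylor_monomial m t) (step_at \<tau> e \<delta>) 0 s\<bar> \<le> \<bar>s - t\<bar> ^ m / fact m"
proof -
  have "\<bar>leibniz (taylor_monomial m t) (step_at \<tau> e \<delta>) 0 s\<bar> = \<bar>s - t\<bar> ^ m / fact m * \<bar>step_at \<tau> e \<delta> 0 s\<bar>"
    by (simp add: taylor_monomial_def abs_mult power_abs)
  also have "\<dots> \<le> \<bar>s - t\<bar> ^ m / fact m * 1"
    using smooth_step_0_bounds[of "\<tau> / \<delta> * (s - e)"] by (intro mult_left_mono) (auto simp: step_at_def)
  finally show ?thesis by simp
qed

definition cutoff_deriv_bound :: "nat \<Rightarrow> real \<Rightarrow> real" where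
  "cutoff_deriv_bound k \<delta> = (\<Sum>i<k. real (k choose i) * step_bound (k - i) / \<delta> ^ (k - i))"

lemma cutoff_deriv_bound_nonneg: "0 < \<delta> \<Longrightarrow> 0 \<le> cutoff_deriv_bound k \<delta>"
  unfolding cutoff_deriv_bound_def using order_trans[OF abs_ge_zero abs_smooth_step_le]
  by (intro sum_nonneg) auto

lemma abs_cutoff_taylor_monomial_le:
  assumes \<sigma>: "\<bar>\<sigma>\<bar> = 1" and \<delta>: "0 < \<delta>" and k: "1 \<le> k" and r: "\<bar>s - t\<bar> \<le> r"
  shows "\<bar>leibniz (taylor_monomial (k - 1) t) (step_at (- \<sigma>) e \<delta>) k s\<bar>
     \<le> (1 + r) ^ (k - 1) * cutoff_deriv_bound k \<delta> * indicator (closed_segment (e - \<sigma> * \<delta>) e) s"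
proof -
  define T H where "T = taylor_monomial (k - 1) t" and "H = step_at (- \<sigma>) e \<delta>"
  have "leibniz T H k s = (\<Sum>i<Suc k. real (k choose i) * T i s * H (k - i) s)"
    by (simp add: leibniz_def lessThan_Suc_atMost)
  also have "\<dots> = (\<Sum>i<k. real (k choose i) * T i s * H (k - i) s)"
    using k by (simp add: T_def taylor_monomial_def)
  finally have top: "leibniz T H k s = (\<Sum>i<k. real (k choose i) * T i s * H (k - i) s)" .
  show ?thesis
  proof (cases "s \<in> closed_segment (e - \<sigma> * \<delta>) e")
    case True
    have "\<bar>real (k choose i) * T i s * H (k - i) s\<bar>
        \<le> real (k choose i) * ((1 + r) ^ (k - 1) * (step_bound (k - i) / \<delta> ^ (k - i)))" for i
    proof -
      have "\<bar>T i s\<bar> \<le> (1 + r) ^ (k - 1)"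
        unfolding T_def using r by (intro order_trans[OF abs_taylor_monomial_le] power_mono) auto
      then have "\<bar>T i s\<bar> * \<bar>H (k - i) s\<bar> \<le> (1 + r) ^ (k - 1) * (step_bound (k - i) / \<delta> ^ (k - i))"
        unfolding H_def by (rule mult_mono[OF _ abs_step_at_le[of "- \<sigma>", OF _ \<delta>]]) (use \<sigma> r in auto)
      from mult_left_mono[OF this, of "real (k choose i)"] show ?thesis
        by (simp add: abs_mult mult.assoc)
    qed
    then have "\<bar>leibniz T H k s\<bar>
        \<le> (\<Sum>i<k. real (k choose i) * ((1 + r) ^ (k - 1) * (step_bound (k - i) / \<delta> ^ (k - i))))"
      unfolding top by (intro order_trans[OF sum_abs sum_mono])
    then show ?thesis using True by (simp add: T_def H_def cutoff_deriv_bound_def sum_distrib_left mult_ac)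
  next
    case False
    have "- \<sigma> * (s - e) \<le> 0 \<or> \<delta> \<le> - \<sigma> * (s - e)"
      using abs_eq_1_cases[OF \<sigma>] False \<delta> by (auto simp: closed_segment_eq_real_ivl)
    then have "H (Suc j) s = 0" for j
      unfolding H_def by (rule step_at_Suc_outside[OF \<delta>])
    then have "H (k - i) s = 0" if "i < k" for i
      using that by (metis Suc_diff_Suc)
    then have "leibniz T H k s = 0" unfolding top by simp
    then show ?thesis using False by (simp add: T_def H_def)
  qed
qed

lemma abs_set_integral_le_set_integral:
  fixes F g :: "real \<Rightarrow> real"
  assumes F: "set_integrable lborel J F" and g: "set_integrable lborel I g" and "I \<subseteq> J"
    and bound: "\<And>s. s \<in> J \<Longrightarrow> \<bar>F s\<bar> \<le> indicator I s * g s"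
  shows "\<bar>LBINT s:J. F s\<bar> \<le> (LBINT s:I. g s)"
proof -
  have "\<bar>LBINT s:J. F s\<bar> \<le> (LBINT s:J. \<bar>F s\<bar>)"
    using set_integral_norm_bound[OF F] by simp
  also have "\<dots> \<le> (LBINT s:I. g s)"
    unfolding set_lebesgue_integral_def
  proof (rule integral_mono)
    show "integrable lborel (\<lambda>s. indicator J s *\<^sub>R \<bar>F s\<bar>)"
      using set_integrable_abs[OF F] by (simp add: set_integrable_def)
    show "integrable lborel (\<lambda>s. indicator I s *\<^sub>R g s)"
      using g by (simp add: set_integrable_def)
    show "indicator J s *\<^sub>R \<bar>F s\<bar> \<le> indicator I s *\<^sub>R g s" for s
      using bound[of s] \<open>I \<subseteq> J\<close> by (cases "s \<in> J") (auto simp: indicator_def)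
  qed
  finally show ?thesis .
qed

lemma weak_deriv_cutoff_representation:
  assumes chain: "\<forall>j<k. weak_deriv_on R (vs j) (vs (Suc j))" and k: "1 \<le> k"
    and cont: "isCont (vs 0) t" and \<sigma>: "\<bar>\<sigma>\<bar> = 1"
    and te: "t \<in> {0<..<R}" "e \<in> {0<..<R}" and \<delta>: "0 < \<delta>" "\<delta> \<le> \<sigma> * (e - t)"
  defines "G \<equiv> leibniz (taylor_monomial (k - 1) t) (step_at (- \<sigma>) e \<delta>)"
  shows "vs 0 t = \<sigma> * ((-1) ^ k * (LBINT s:closed_segment t e. vs k s * G 0 s)
                        - (LBINT s:closed_segment t e. vs 0 s * G k s))"
proof (rule weak_deriv_representation[OF chain k cont \<sigma> te])
  show "0 < \<sigma> * (e - t)" using \<delta> by linarith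
  show "deriv_seq G"
    unfolding G_def by (intro deriv_seq_leibniz deriv_seq_taylor_monomial deriv_seq_step_at)
  show "G j s = 0" if "0 \<le> \<sigma> * (s - e)" for j s
    unfolding G_def by (rule leibniz_step_at_vanishes_beyond[OF \<delta>(1) that])
  show "G j t = 0" if "j < k - 1" for j
    using that unfolding G_def leibniz_step_at_plateau[OF \<delta>] by (simp add: taylor_monomial_at)
  show "G (k - 1) t = 1"
    unfolding G_def leibniz_step_at_plateau[OF \<delta>] by (simp add: taylor_monomial_at)
qed

lemma weak_deriv_cutoff_bound:
  assumes chain: "\<forall>j<k. weak_deriv_on R (vs j) (vs (Suc j))" and k: "1 \<le> k"
    and cont: "isCont (vs 0) t" and \<sigma>: "\<bar>\<sigma>\<bar> = 1"
    and te: "t \<in> {0<..<R}" "e \<in> {0<..<R}" and \<delta>: "0 < \<delta>" "\<delta> \<le> \<sigma> * (e - t)"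
  shows "\<bar>vs 0 t\<bar> \<le> (LBINT s:closed_segment t e. \<bar>vs k s\<bar> * \<bar>s - t\<bar> ^ (k - 1)) / fact (k - 1)
      + (1 + R) ^ (k - 1) * cutoff_deriv_bound k \<delta>
        * (LBINT s:closed_segment (e - \<sigma> * \<delta>) e. \<bar>vs 0 s\<bar>)"
proof -
  define G where "G = leibniz (taylor_monomial (k - 1) t) (step_at (- \<sigma>) e \<delta>)"
  define M where "M = (1 + R) ^ (k - 1) * cutoff_deriv_bound k \<delta>"
  define J L where "J = closed_segment t e" and "L = closed_segment (e - \<sigma> * \<delta>) e"
  have J: "J = {min t e..max t e}" and L: "L = {min (e - \<sigma> * \<delta>) e..max (e - \<sigma> * \<delta>) e}"
    by (simp_all add: J_def L_def closed_segment_eq_real_ivl)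
  have LJ: "L \<subseteq> J" and JR: "J \<subseteq> {0<..<R}"
    using abs_eq_1_cases[OF \<sigma>] \<delta> te by (auto simp: J L)
  have G: "deriv_seq G"
    unfolding G_def by (intro deriv_seq_leibniz deriv_seq_taylor_monomial deriv_seq_step_at)
  have vint: "set_integrable lborel {a..b} (vs j)" if "j \<le> k" "{a..b} \<subseteq> J" "a \<le> b" for j a b
  proof -
    from that have "a \<in> J" "b \<in> J" by auto
    with JR show ?thesis by (intro weak_deriv_chain_set_integrable[OF chain k \<open>j \<le> k\<close>]) auto
  qed
  have "\<bar>vs 0 t\<bar> \<le> \<bar>LBINT s:J. vs k s * G 0 s\<bar> + \<bar>LBINT s:J. vs 0 s * G k s\<bar>"
    using weak_deriv_cutoff_representation[OF chain k cont \<sigma> te \<delta>] \<sigma>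
      abs_triangle_ineq4[of "(-1) ^ k * (LBINT s:J. vs k s * G 0 s)"]
    by (simp add: J_def G_def abs_mult)
  moreover have "\<bar>LBINT s:J. vs k s * G 0 s\<bar> \<le> (LBINT s:J. \<bar>vs k s\<bar> * \<bar>s - t\<bar> ^ (k - 1) / fact (k - 1))"
  proof (rule abs_set_integral_le_set_integral[OF _ _ order_refl])
    show "set_integrable lborel J (\<lambda>s. vs k s * G 0 s)"
      unfolding J by (intro set_integrable_mult_continuous vint deriv_seq_continuous_on[OF G]) (auto simp: J)
    have "continuous_on J (\<lambda>s. \<bar>s - t\<bar> ^ (k - 1) / fact (k - 1))" by (intro continuous_intros) auto
    from set_integrable_mult_continuous[OF set_integrable_abs[OF vint[of k]] this[unfolded J]]
    show "set_integrable lborel J (\<lambda>s. \<bar>vs k s\<bar> * \<bar>s - t\<bar> ^ (k - 1) / fact (k - 1))"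
      by (simp add: J)
    show "\<bar>vs k s * G 0 s\<bar> \<le> indicator J s * (\<bar>vs k s\<bar> * \<bar>s - t\<bar> ^ (k - 1) / fact (k - 1))"
      if "s \<in> J" for s
      using that mult_left_mono[OF abs_cutoff_taylor_monomial_0_le abs_ge_zero[of "vs k s"]]
      by (simp add: G_def abs_mult)
  qed
  moreover have "\<bar>LBINT s:J. vs 0 s * G k s\<bar> \<le> (LBINT s:L. M * \<bar>vs 0 s\<bar>)"
  proof (rule abs_set_integral_le_set_integral[OF _ _ LJ])
    show "set_integrable lborel J (\<lambda>s. vs 0 s * G k s)"
      unfolding J by (intro set_integrable_mult_continuous vint deriv_seq_continuous_on[OF G]) (auto simp: J)
    show "set_integrable lborel L (\<lambda>s. M * \<bar>vs 0 s\<bar>)"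
      unfolding L using vint[of 0] LJ by (simp add: L set_integrable_abs)
    show "\<bar>vs 0 s * G k s\<bar> \<le> indicator L s * (M * \<bar>vs 0 s\<bar>)" if "s \<in> J" for s
    proof -
      have "\<bar>s - t\<bar> \<le> R" using that JR te by (auto simp: J)
      from abs_cutoff_taylor_monomial_le[OF \<sigma> \<delta>(1) k this, of e]
      have "\<bar>G k s\<bar> \<le> M * indicator L s" by (simp add: G_def M_def L_def)
      from mult_right_mono[OF this abs_ge_zero[of "vs 0 s"]] show ?thesis by (simp add: abs_mult mult_ac)
    qed
  qed
  ultimately show ?thesis by (simp add: M_def J_def L_def)
qed

section \<open>The pointwise estimate\<close>

lemma wint_powr_le_Wkp_sinh_norm:
  "0 < p \<Longrightarrow> j \<le> k \<Longrightarrow> wint N p R (vs j) powr (1/p) \<le> Wkp_sinh_norm k p N R vs"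
  unfolding Wkp_sinh_norm_def
  by (intro powr_mono2) (auto intro!: member_le_sum wint_nonneg sum_nonneg)

definition sinh_dual_norm :: "real \<Rightarrow> real \<Rightarrow> real \<Rightarrow> real \<Rightarrow> real" where
  "sinh_dual_norm N p a b = (LBINT s:{a..b}. sinh s powr (-(N-1)/(p-1))) powr ((p-1)/p)"

lemma sinh_dual_norm_nonneg: "0 \<le> sinh_dual_norm N p a b"
  by (simp add: sinh_dual_norm_def)

lemma sinh_dual_norm_mono:
  assumes "1 < p" "0 < a" "b \<le> c"
  shows "sinh_dual_norm N p a b \<le> sinh_dual_norm N p a c"
proof -
  have int: "set_integrable lborel {a..x} (\<lambda>s. sinh s powr (-(N-1)/(p-1)))" for x
    by (intro borel_integrable_atLeastAtMost' continuous_intros) (use assms in auto)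
  have "(LBINT s:{a..b}. sinh s powr (-(N-1)/(p-1))) \<le> (LBINT s:{a..c}. sinh s powr (-(N-1)/(p-1)))"
    by (rule set_integral_mono_set[OF _ int int]) (use assms in auto)
  moreover have "0 \<le> (LBINT s:{a..b}. sinh s powr (-(N-1)/(p-1)))"
    unfolding set_lebesgue_integral_def by (intro integral_nonneg_AE) (auto simp: indicator_def)
  ultimately show ?thesis
    unfolding sinh_dual_norm_def using assms(1) by (intro powr_mono2) auto
qed

lemma in_Wkp_sinhD:
  assumes "in_Wkp_sinh k p N R vs"
  shows "\<forall>j<k. weak_deriv_on R (vs j) (vs (Suc j))"
    and "j \<le> k \<Longrightarrow> set_integrable lborel {0<..<R} (\<lambda>s. \<bar>vs j s\<bar> powr p * sinh s powr (N - 1))"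
  using assms by (auto simp: in_Wkp_sinh_def)

lemma in_Wkp_sinh_set_integral_abs_le:
  assumes W: "in_Wkp_sinh k p N R vs" and "1 \<le> k" "1 < p" "j \<le> k" "0 < a" "b < R"
  shows "(LBINT s:{a..b}. \<bar>vs j s\<bar>) \<le> Wkp_sinh_norm k p N R vs * sinh_dual_norm N p a b"
proof -
  have "set_integrable lborel {a..b} (vs j)"
    using weak_deriv_chain_set_integrable[OF in_Wkp_sinhD(1)[OF W]] assms by blast
  from sinh_weighted_Holder[OF \<open>1 < p\<close> \<open>0 < a\<close> \<open>b < R\<close> this in_Wkp_sinhD(2)[OF W \<open>j \<le> k\<close>],
      of "\<lambda>_. 1"]
  have "(LBINT s:{a..b}. \<bar>vs j s\<bar>) \<le> wint N p R (vs j) powr (1/p) * sinh_dual_norm N p a b"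
    by (simp add: sinh_dual_norm_def)
  also have "\<dots> \<le> Wkp_sinh_norm k p N R vs * sinh_dual_norm N p a b"
    using assms by (intro mult_right_mono wint_powr_le_Wkp_sinh_norm sinh_dual_norm_nonneg) auto
  finally show ?thesis .
qed

lemma in_Wkp_sinh_bound_near_0:
  assumes R: "0 < R" and k: "1 \<le> k" and p: "1 < p" and N: "N = real k * p"
  shows "\<exists>C. \<forall>vs t. in_Wkp_sinh k p N R vs \<longrightarrow> isCont (vs 0) t \<longrightarrow> t \<in> {0<..<R/2} \<longrightarrow>
           \<bar>vs 0 t\<bar> \<le> ln (tanh (R / 2) / tanh (t / 2)) powr ((p - 1) / p)
               * Lp_sinh_norm N p R (vs k) / fact (k - 1) + C * Wkp_sinh_norm k p N R vs"
proof (intro exI allI impI)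
  fix vs t
  assume W: "in_Wkp_sinh k p N R vs" and cont: "isCont (vs 0) t" and t: "t \<in> {0<..<R/2}"
  note chain = in_Wkp_sinhD(1)[OF W]
  have main: "\<bar>vs 0 t\<bar> \<le> (LBINT s:{t..3*R/4}. \<bar>vs k s\<bar> * \<bar>s - t\<bar> ^ (k - 1)) / fact (k - 1)
      + (1 + R) ^ (k - 1) * cutoff_deriv_bound k (R/4) * (LBINT s:{R/2..3*R/4}. \<bar>vs 0 s\<bar>)"
    using weak_deriv_cutoff_bound[OF chain k cont, of 1 "3*R/4" "R/4"] t R
    by (simp add: closed_segment_eq_real_ivl)
  have vk: "set_integrable lborel {t..3*R/4} (vs k)"
    using weak_deriv_chain_set_integrable[OF chain k order_refl] t R by simp
  have "(LBINT s:{t..3*R/4}. \<bar>vs k s\<bar> * \<bar>s - t\<bar> ^ (k - 1)) \<le> (LBINT s:{t..3*R/4}. \<bar>vs k s * s ^ (k - 1)\<bar>)"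
  proof (rule set_integral_mono)
    have "continuous_on {t..3*R/4} (\<lambda>s. \<bar>s - t\<bar> ^ (k - 1))" by (intro continuous_intros)
    from set_integrable_mult_continuous[OF set_integrable_abs[OF vk] this]
    show "set_integrable lborel {t..3*R/4} (\<lambda>s. \<bar>vs k s\<bar> * \<bar>s - t\<bar> ^ (k - 1))" .
    have "continuous_on {t..3*R/4} (\<lambda>s. s ^ (k - 1))" by (intro continuous_intros)
    from set_integrable_abs[OF set_integrable_mult_continuous[OF vk this]]
    show "set_integrable lborel {t..3*R/4} (\<lambda>s. \<bar>vs k s * s ^ (k - 1)\<bar>)" .
    show "\<bar>vs k s\<bar> * \<bar>s - t\<bar> ^ (k - 1) \<le> \<bar>vs k s * s ^ (k - 1)\<bar>" if "s \<in> {t..3*R/4}" for s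
      using that t by (simp add: abs_mult mult_left_mono power_mono)
  qed
  also have "\<dots> \<le> wint N p R (vs k) powr (1/p) * ln (tanh (R / 2) / tanh (t / 2)) powr ((p - 1) / p)"
    by (rule sinh_weighted_power_bound[OF p k N _ _ _ vk in_Wkp_sinhD(2)[OF W]]) (use t R in auto)
  finally have "(LBINT s:{t..3*R/4}. \<bar>vs k s\<bar> * \<bar>s - t\<bar> ^ (k - 1)) / fact (k - 1)
      \<le> ln (tanh (R / 2) / tanh (t / 2)) powr ((p - 1) / p) * Lp_sinh_norm N p R (vs k) / fact (k - 1)"
    by (simp add: divide_right_mono Lp_sinh_norm_def mult.commute)
  moreover have "(1 + R) ^ (k - 1) * cutoff_deriv_bound k (R/4) * (LBINT s:{R/2..3*R/4}. \<bar>vs 0 s\<bar>)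
      \<le> (1 + R) ^ (k - 1) * cutoff_deriv_bound k (R/4)
        * (Wkp_sinh_norm k p N R vs * sinh_dual_norm N p (R/2) (3*R/4))"
    using R k p cutoff_deriv_bound_nonneg[of "R/4" k]
    by (intro mult_left_mono in_Wkp_sinh_set_integral_abs_le[OF W]) auto
  ultimately show "\<bar>vs 0 t\<bar> \<le> ln (tanh (R / 2) / tanh (t / 2)) powr ((p - 1) / p) * Lp_sinh_norm N p R (vs k) / fact (k - 1)
      + (1 + R) ^ (k - 1) * cutoff_deriv_bound k (R/4) * sinh_dual_norm N p (R/2) (3*R/4)
        * Wkp_sinh_norm k p N R vs"
    using main by (simp add: mult_ac)
qed

lemma in_Wkp_sinh_bound_near_R:
  assumes R: "0 < R" and k: "1 \<le> k" and p: "1 < p"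
  shows "\<exists>C. \<forall>vs t. in_Wkp_sinh k p N R vs \<longrightarrow> isCont (vs 0) t \<longrightarrow> t \<in> {R/2..<R} \<longrightarrow>
           \<bar>vs 0 t\<bar> \<le> C * Wkp_sinh_norm k p N R vs"
proof (intro exI allI impI)
  fix vs t
  assume W: "in_Wkp_sinh k p N R vs" and cont: "isCont (vs 0) t" and t: "t \<in> {R/2..<R}"
  note chain = in_Wkp_sinhD(1)[OF W]
  have main: "\<bar>vs 0 t\<bar> \<le> (LBINT s:{R/8..t}. \<bar>vs k s\<bar> * \<bar>s - t\<bar> ^ (k - 1)) / fact (k - 1)
      + (1 + R) ^ (k - 1) * cutoff_deriv_bound k (R/8) * (LBINT s:{R/8..R/4}. \<bar>vs 0 s\<bar>)"
    using weak_deriv_cutoff_bound[OF chain k cont, of "-1" "R/8" "R/8"] t R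
    by (simp add: closed_segment_eq_real_ivl)
  have vk: "set_integrable lborel {R/8..t} (vs k)"
    using weak_deriv_chain_set_integrable[OF chain k order_refl] t R by simp
  have "(LBINT s:{R/8..t}. \<bar>vs k s\<bar> * \<bar>s - t\<bar> ^ (k - 1)) \<le> (LBINT s:{R/8..t}. R ^ (k - 1) * \<bar>vs k s\<bar>)"
  proof (rule set_integral_mono)
    have "continuous_on {R/8..t} (\<lambda>s. \<bar>s - t\<bar> ^ (k - 1))" by (intro continuous_intros)
    from set_integrable_mult_continuous[OF set_integrable_abs[OF vk] this]
    show "set_integrable lborel {R/8..t} (\<lambda>s. \<bar>vs k s\<bar> * \<bar>s - t\<bar> ^ (k - 1))" .
    show "set_integrable lborel {R/8..t} (\<lambda>s. R ^ (k - 1) * \<bar>vs k s\<bar>)"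
      using set_integrable_abs[OF vk] by simp
    show "\<bar>vs k s\<bar> * \<bar>s - t\<bar> ^ (k - 1) \<le> R ^ (k - 1) * \<bar>vs k s\<bar>" if "s \<in> {R/8..t}" for s
      using that t R by (simp add: mult.commute mult_left_mono power_mono)
  qed
  also have "\<dots> \<le> R ^ (k - 1) * (Wkp_sinh_norm k p N R vs * sinh_dual_norm N p (R/8) t)"
    using R t k p by (simp add: mult_left_mono in_Wkp_sinh_set_integral_abs_le[OF W])
  also have "\<dots> \<le> R ^ (k - 1) * (Wkp_sinh_norm k p N R vs * sinh_dual_norm N p (R/8) R)"
    using R t p by (intro mult_left_mono sinh_dual_norm_mono) (auto simp: Wkp_sinh_norm_def)
  finally have "(LBINT s:{R/8..t}. \<bar>vs k s\<bar> * \<bar>s - t\<bar> ^ (k - 1)) / fact (k - 1)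
      \<le> R ^ (k - 1) * sinh_dual_norm N p (R/8) R / fact (k - 1) * Wkp_sinh_norm k p N R vs"
    by (simp add: divide_right_mono mult_ac)
  moreover have "(1 + R) ^ (k - 1) * cutoff_deriv_bound k (R/8) * (LBINT s:{R/8..R/4}. \<bar>vs 0 s\<bar>)
      \<le> (1 + R) ^ (k - 1) * cutoff_deriv_bound k (R/8) * sinh_dual_norm N p (R/8) (R/4)
        * Wkp_sinh_norm k p N R vs"
    using mult_left_mono[OF in_Wkp_sinh_set_integral_abs_le[OF W k p _ _ _, of 0 "R/8" "R/4"],
        of "(1 + R) ^ (k - 1) * cutoff_deriv_bound k (R/8)"] R cutoff_deriv_bound_nonneg[of "R/8" k]
    by (simp add: mult_ac)
  ultimately show "\<bar>vs 0 t\<bar> \<le> (R ^ (k - 1) * sinh_dual_norm N p (R/8) R / fact (k - 1)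
      + (1 + R) ^ (k - 1) * cutoff_deriv_bound k (R/8) * sinh_dual_norm N p (R/8) (R/4))
      * Wkp_sinh_norm k p N R vs"
    unfolding distrib_right using main by linarith
qed

lemma isCont_if_continuous_on_Ioc:
  fixes f :: "real \<Rightarrow> real"
  assumes "continuous_on {a<..b} f" "t \<in> {a<..<b}"
  shows "isCont f t"
proof -
  have "continuous_on {a<..<b} f" by (rule continuous_on_subset[OF assms(1)]) auto
  then show ?thesis using assms(2) by (simp add: continuous_on_eq_continuous_at)
qed

lemma abs_le_at_right_endpoint:
  fixes f :: "real \<Rightarrow> real"
  assumes "a < b" "continuous_on {a..b} f" "\<And>t. a \<le> t \<Longrightarrow> t < b \<Longrightarrow> \<bar>f t\<bar> \<le> M"
  shows "\<bar>f b\<bar> \<le> M"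
proof (rule tendsto_upperbound)
  have "(f \<longlongrightarrow> f b) (at b within {a..b})"
    using assms(1,2) by (simp add: continuous_on_def)
  then show "((\<lambda>t. \<bar>f t\<bar>) \<longlongrightarrow> \<bar>f b\<bar>) (at_left b)"
    using assms(1) by (intro tendsto_rabs) (simp add: at_within_Icc_at_left)
  show "\<forall>\<^sub>F t in at_left b. \<bar>f t\<bar> \<le> M"
    using eventually_at_left_real[OF assms(1)] by eventually_elim (use assms(3) in auto)
qed simp

lemma in_Wkp_sinh_bound_up_to_R:
  assumes R: "0 < R" and k: "1 \<le> k" and p: "1 < p"
  shows "\<exists>C. \<forall>vs t. in_Wkp_sinh k p N R vs \<longrightarrow> continuous_on {0<..R} (vs 0) \<longrightarrow> t \<in> {R/2..R} \<longrightarrow>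
           \<bar>vs 0 t\<bar> \<le> C * Wkp_sinh_norm k p N R vs"
proof -
  obtain C where C: "\<And>vs t. in_Wkp_sinh k p N R vs \<Longrightarrow> isCont (vs 0) t \<Longrightarrow> t \<in> {R/2..<R} \<Longrightarrow>
      \<bar>vs 0 t\<bar> \<le> C * Wkp_sinh_norm k p N R vs"
    using in_Wkp_sinh_bound_near_R[OF R k p] by blast
  have "\<bar>vs 0 t\<bar> \<le> C * Wkp_sinh_norm k p N R vs"
    if W: "in_Wkp_sinh k p N R vs" and cont: "continuous_on {0<..R} (vs 0)" and t: "t \<in> {R/2..R}" for vs t
  proof -
    have interior: "\<bar>vs 0 s\<bar> \<le> C * Wkp_sinh_norm k p N R vs" if "R/2 \<le> s" "s < R" for s
      using C[OF W isCont_if_continuous_on_Ioc[OF cont]] that R by auto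
    have "\<bar>vs 0 R\<bar> \<le> C * Wkp_sinh_norm k p N R vs"
    proof (rule abs_le_at_right_endpoint[of "R/2" R "vs 0"])
      show "continuous_on {R/2..R} (vs 0)" by (rule continuous_on_subset[OF cont]) (use R in auto)
    qed (use R interior in auto)
    with interior t show ?thesis by (cases "t = R") auto
  qed
  then show ?thesis by blast
qed

lemma in_W1p_sinh_bound_vanishing_at_R:
  assumes R: "0 < R" and p: "1 < p" and N: "N = p"
    and W: "in_Wkp_sinh 1 p N R vs" and cont: "continuous_on {0<..R} (vs 0)" and vR: "vs 0 R = 0"
    and t: "t \<in> {0<..<R}"
  shows "\<bar>vs 0 t\<bar> \<le> ln (tanh (R / 2) / tanh (t / 2)) powr ((p - 1) / p) * Lp_sinh_norm N p R (vs 1)"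
proof (rule field_le_epsilon)
  fix \<epsilon> :: real assume "0 < \<epsilon>"
  define K where "K = step_bound 1"
  define \<eta> where "\<eta> = \<epsilon> / (K + 1)"
  have K0: "0 \<le> K" unfolding K_def using order_trans[OF abs_ge_zero abs_smooth_step_le] .
  have \<eta>: "0 < \<eta>" "K * \<eta> \<le> \<epsilon>"
    using \<open>0 < \<epsilon>\<close> K0 by (auto simp: \<eta>_def field_simps)
  note chain = in_Wkp_sinhD(1)[OF W] and fw = in_Wkp_sinhD(2)[OF W]
  obtain \<rho> where "0 < \<rho>" and \<rho>: "\<And>s. s \<in> {0<..R} \<Longrightarrow> \<bar>s - R\<bar> < \<rho> \<Longrightarrow> \<bar>vs 0 s\<bar> < \<eta>"
    using cont \<eta>(1) R vR unfolding continuous_on_iff dist_real_def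
    by (metis diff_zero greaterThanAtMost_iff order_refl)
  define d where "d = min \<rho> (R - t)"
  define b where "b = R - d / 2"
  define \<delta> where "\<delta> = d / 4"
  have d: "0 < d" "d \<le> \<rho>" "d \<le> R - t" using \<open>0 < \<rho>\<close> t by (auto simp: d_def)
  have small: "\<bar>vs 0 s\<bar> \<le> \<eta>" if "s \<in> {b - \<delta>..b}" for s
    using \<rho>[of s] that d t by (auto simp: b_def \<delta>_def)
  have cont_t: "isCont (vs 0) t" by (rule isCont_if_continuous_on_Ioc[OF cont t])
  have main: "\<bar>vs 0 t\<bar> \<le> (LBINT s:{t..b}. \<bar>vs 1 s\<bar>) + K / \<delta> * (LBINT s:{b - \<delta>..b}. \<bar>vs 0 s\<bar>)"
    using weak_deriv_cutoff_bound[OF chain order_refl cont_t, of 1 b \<delta>] t d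
    by (simp add: K_def b_def \<delta>_def cutoff_deriv_bound_def closed_segment_eq_real_ivl)
  have T1: "(LBINT s:{t..b}. \<bar>vs 1 s\<bar>)
      \<le> ln (tanh (R / 2) / tanh (t / 2)) powr ((p - 1) / p) * Lp_sinh_norm N p R (vs 1)"
  proof -
    have "set_integrable lborel {t..b} (vs 1)"
      using weak_deriv_chain_set_integrable[OF chain order_refl order_refl] t d by (auto simp: b_def)
    from sinh_weighted_power_bound[OF p order_refl _ _ _ _ this fw]
    show ?thesis using N t d by (simp add: b_def Lp_sinh_norm_def mult.commute)
  qed
  have "(LBINT s:{b - \<delta>..b}. \<bar>vs 0 s\<bar>) \<le> (LBINT s:{b - \<delta>..b}. \<eta>)"
  proof (rule set_integral_mono[OF _ _ small])
    show "set_integrable lborel {b - \<delta>..b} (\<lambda>s. \<bar>vs 0 s\<bar>)"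
      using weak_deriv_chain_set_integrable[OF chain order_refl, of 0 "b - \<delta>" b] t d
      by (auto simp: b_def \<delta>_def intro: set_integrable_abs)
  qed (auto intro: borel_integrable_atLeastAtMost')
  also have "(LBINT s:{b - \<delta>..b}. \<eta>) = \<delta> * \<eta>" using d by (simp add: set_integral_const \<delta>_def)
  finally have "K / \<delta> * (LBINT s:{b - \<delta>..b}. \<bar>vs 0 s\<bar>) \<le> K / \<delta> * (\<delta> * \<eta>)"
    using K0 d by (intro mult_left_mono) (auto simp: \<delta>_def)
  also have "\<dots> = K * \<eta>" using d by (simp add: \<delta>_def)
  finally show "\<bar>vs 0 t\<bar> \<le> ln (tanh (R / 2) / tanh (t / 2)) powr ((p - 1) / p) * Lp_sinh_norm N p R (vs 1) + \<epsilon>"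
    using main T1 \<eta>(2) by linarith
qed

theorem proposition5p7:
  fixes R p N :: real and k :: nat
  assumes "0 < R" and "1 \<le> k" and "1 < p" and "N = real k * p"
  shows "(\<exists>C>0. \<forall>vs t. in_Wkp_sinh k p N R vs \<longrightarrow> continuous_on {0<..R} (vs 0) \<longrightarrow>
            t \<in> {0<..R} \<longrightarrow>
            \<bar>vs 0 t\<bar> \<le> ln (tanh (R / 2) / tanh (t / 2)) powr ((p - 1) / p)
                  * Lp_sinh_norm N p R (vs k) / fact (k - 1)
                + C * Wkp_sinh_norm k p N R vs)
       \<and> (k = 1 \<longrightarrow> (\<forall>vs t. in_Wkp_sinh k p N R vs \<longrightarrow> continuous_on {0<..R} (vs 0) \<longrightarrow>
            vs 0 R = 0 \<longrightarrow> t \<in> {0<..R} \<longrightarrow>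
            \<bar>vs 0 t\<bar> \<le> ln (tanh (R / 2) / tanh (t / 2)) powr ((p - 1) / p)
                  * Lp_sinh_norm N p R (vs k) / fact (k - 1)))"
proof (intro conjI impI allI)
  note R = assms(1) and k = assms(2) and p = assms(3) and N = assms(4)
  obtain C1 where C1: "\<And>vs t. in_Wkp_sinh k p N R vs \<Longrightarrow> isCont (vs 0) t \<Longrightarrow> t \<in> {0<..<R/2} \<Longrightarrow>
      \<bar>vs 0 t\<bar> \<le> ln (tanh (R / 2) / tanh (t / 2)) powr ((p - 1) / p)
        * Lp_sinh_norm N p R (vs k) / fact (k - 1) + C1 * Wkp_sinh_norm k p N R vs"
    using in_Wkp_sinh_bound_near_0[OF R k p N] by blast
  obtain C2 where C2: "\<And>vs t. in_Wkp_sinh k p N R vs \<Longrightarrow> continuous_on {0<..R} (vs 0) \<Longrightarrow>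
      t \<in> {R/2..R} \<Longrightarrow> \<bar>vs 0 t\<bar> \<le> C2 * Wkp_sinh_norm k p N R vs"
    using in_Wkp_sinh_bound_up_to_R[OF R k p] by blast
  show "\<exists>C>0. \<forall>vs t. in_Wkp_sinh k p N R vs \<longrightarrow> continuous_on {0<..R} (vs 0) \<longrightarrow> t \<in> {0<..R} \<longrightarrow>
      \<bar>vs 0 t\<bar> \<le> ln (tanh (R / 2) / tanh (t / 2)) powr ((p - 1) / p)
        * Lp_sinh_norm N p R (vs k) / fact (k - 1) + C * Wkp_sinh_norm k p N R vs"
  proof (intro exI[of _ "\<bar>C1\<bar> + \<bar>C2\<bar> + 1"] conjI allI impI)
    fix vs t
    assume W: "in_Wkp_sinh k p N R vs" and cont: "continuous_on {0<..R} (vs 0)" and t: "t \<in> {0<..R}"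
    have "C * Wkp_sinh_norm k p N R vs \<le> (\<bar>C1\<bar> + \<bar>C2\<bar> + 1) * Wkp_sinh_norm k p N R vs"
      if "C = C1 \<or> C = C2" for C
      using that by (intro mult_right_mono) (auto simp: Wkp_sinh_norm_def)
    moreover have "0 \<le> ln (tanh (R / 2) / tanh (t / 2)) powr ((p - 1) / p)
        * Lp_sinh_norm N p R (vs k) / fact (k - 1)"
      by (simp add: Lp_sinh_norm_def)
    ultimately show "\<bar>vs 0 t\<bar> \<le> ln (tanh (R / 2) / tanh (t / 2)) powr ((p - 1) / p)
        * Lp_sinh_norm N p R (vs k) / fact (k - 1) + (\<bar>C1\<bar> + \<bar>C2\<bar> + 1) * Wkp_sinh_norm k p N R vs"
      using C1[OF W isCont_if_continuous_on_Ioc[OF cont], of t] C2[OF W cont, of t] t R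
      by (cases "t < R/2") force+
  qed simp
  fix vs t
  assume "k = 1" and W: "in_Wkp_sinh k p N R vs" and cont: "continuous_on {0<..R} (vs 0)"
    and vR: "vs 0 R = 0" and t: "t \<in> {0<..R}"
  have "N = p" "in_Wkp_sinh 1 p N R vs" using N W \<open>k = 1\<close> by auto
  from in_W1p_sinh_bound_vanishing_at_R[OF R p this cont vR, of t]
  show "\<bar>vs 0 t\<bar> \<le> ln (tanh (R / 2) / tanh (t / 2)) powr ((p - 1) / p)
      * Lp_sinh_norm N p R (vs k) / fact (k - 1)"
    using t vR \<open>k = 1\<close> by (cases "t = R") (auto simp: Lp_sinh_norm_def)
qed

end
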